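(* Consider the finite volume scheme $q_i^{n+1}=q_i^n-\frac{\Delta t}{\Delta x_i}\big(\mathcal F_l(q_i^n,q_{i+1}^n)-\mathcal F_r(q_{i-1}^n,q_i^n)\big)$ described in the context, with pseudo-conservative variable $q=(h,hu,h\sigma_{xx},h\sigma_{zz})$, with relaxation speeds $c_l,c_r$ chosen as in the context, under the CFL condition $\Delta t\,A(q_i^n,q_{i+1}^n)\le\frac12\min(\Delta x_i,\Delta x_{i+1})$ for all $i$. Then: (i) it is consistent with the system of the context for smooth solutions; (ii) it keeps the positivity of $h,\sigma_{xx},\sigma_{zz}$: if all $q_i^n$ have $h>0,\sigma_{xx}>0,\sigma_{zz}>0$, so do all $q_i^{n+1}$; (iii) it is conservative in the variables $h$ and $hu$ (the first two components of $\mathcal F_l(q_l,q_r)$ and $\mathcal F_r(q_l,q_r)$ coincide); (iv) it satisfies the discrete energy inequality: there exists a numerical energy flux $\mathcal G(q_l,q_r)$ with $\mathcal G(q,q)=G(q)$ such that $E(q_i^{n+1})-E(q_i^n)+\frac{\Delta t}{\Delta x_i}\big(\mathcal G(q_i^n,q_{i+1}^n)-\mathcal G(q_{i-1}^n,q_i^n)\big)\le0$ for all $i$; (v) it satisfies the maximum principle on $s_{xx}$ and the minimum principle on $s_{zz}$: if for a constant $k>0$ one has $s_{xx}(q_i^n)\le k$ for all $i$ (resp. $s_{zz}(q_i^n)\ge k$ for all $i$), then $s_{xx}(q_i^{n+1})\le k$ (resp. $s_{zz}(q_i^{n+1})\ge k$) for all $i$; (vi) steady contact discontinuities where $u=0$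 and $P$ is constant are exactly resolved: if $u_i^n=0$ for all $i$ and $P(q_i^n)$ does not depend on $i$, then $q_i^{n+1}=q_i^n$ for all $i$; (vii) data with bounded propagation speeds give finite numerical propagation speed: there is an absolute constant $C$ such that $A(q_l,q_r)\le C(|u_l|+|u_r|+a_l+a_r)$ for all states $q_l,q_r$; (viii) the numerical viscosity is sharp: as $q_l,q_r$ tend to a common state $q$, the speeds $\Sigma_1,\Sigma_2,\Sigma_3$ tend respectively to the exact characteristic speeds $u-\sqrt{\partial_hP|_{\boldsymbol s}},\ u,\ u+\sqrt{\partial_hP|_{\boldsymbol s}}$ evaluated at $q$.
   Context: We consider the one-dimensional system for $h\ge0$, velocity $u$, and $\sigma_{xx},\sigma_{zz}>0$: $\partial_t h+\partial_x(hu)=0$, $\partial_t(hu)+\partial_x(hu^2+P)=0$, $\partial_t(h\sigma_{xx})+\partial_x(h\sigma_{xx}u)-2h\sigma_{xx}\partial_xu=0$, $\partial_t(h\sigma_{zz})+\partial_x(h\sigma_{zz}u)+2h\sigma_{zz}\partial_xu=0$, with $P=g\frac{h^2}{2}+\frac{\eta_p}{2\lambda}h(\sigma_{zz}-\sigma_{xx})$, constants $g,\eta_p,\lambda>0$. States $q=(h,hu,h\sigma_{xx},h\sigma_{zz})$ with $h>0,\sigma_{xx}>0,\sigma_{zz}>0$. Set $\boldsymbol s=(s_{xx},s_{zz})=(\sigma_{xx}^{-1/2}/h,\ \sigma_{zz}^{1/2}/h)$; then $\partial_hP|_{\boldsymbol s}=gh+\frac{\eta_p}{2\lambda}(3\sigma_{zz}+\sigma_{xx})$.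 Energy $E(q)=h\frac{u^2}{2}+g\frac{h^2}{2}+\frac{\eta_p}{4\lambda}h(\sigma_{xx}+\sigma_{zz}-\ln(\sigma_{xx}\sigma_{zz})-2)$, energy flux $G(q)=(E+P)u$. Relaxation speeds: for states $q_l,q_r$, $P_l=P(q_l)$, $P_r=P(q_r)$, $a_l=\sqrt{\partial_hP|_{\boldsymbol s}(q_l)}$, $a_r=\sqrt{\partial_hP|_{\boldsymbol s}(q_r)}$, $\frac{c_l}{h_l}=a_l+2\big(\max(0,u_l-u_r)+\frac{\max(0,P_r-P_l)}{h_la_l+h_ra_r}\big)$, $\frac{c_r}{h_r}=a_r+2\big(\max(0,u_l-u_r)+\frac{\max(0,P_l-P_r)}{h_la_l+h_ra_r}\big)$. Riemann solver: $\pi_l=P_l$, $\pi_r=P_r$, $u^*=\frac{c_lu_l+c_ru_r+\pi_l-\pi_r}{c_l+c_r}$, $\pi^*=\frac{c_r\pi_l+c_l\pi_r-c_lc_r(u_r-u_l)}{c_l+c_r}$, $\frac1{h_l^*}=\frac1{h_l}+\frac{c_r(u_r-u_l)+\pi_l-\pi_r}{c_l(c_l+c_r)}$, $\frac1{h_r^*}=\frac1{h_r}+\frac{c_l(u_r-u_l)+\pi_r-\pi_l}{c_r(c_l+c_r)}$, $\sigma_{xx,l}^*=\sigma_{xx,l}(h_l/h_l^* )^2$, $\sigma_{xx,r}^*=\sigma_{xx,r}(h_r/h_r^* )^2$, $\sigma_{zz,l}^*=\sigma_{zz,l}(h_l^*/h_l)^2$, $\sigma_{zz,r}^*=\sigma_{zz,r}(h_r^*/h_r)^2$;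 $q_l^*=(h_l^*,h_l^*u^*,h_l^*\sigma_{xx,l}^*,h_l^*\sigma_{zz,l}^* )$, $q_r^*$ similarly; speeds $\Sigma_1=u_l-c_l/h_l$, $\Sigma_2=u^*$, $\Sigma_3=u_r+c_r/h_r$. The self-similar approximate solution equals $q_l$ (with $\pi=\pi_l$) for $\xi<\Sigma_1$, $q_l^*$ (with $\pi=\pi^*$) on $(\Sigma_1,\Sigma_2)$, $q_r^*$ (with $\pi=\pi^*$) on $(\Sigma_2,\Sigma_3)$, $q_r$ (with $\pi=\pi_r$) for $\xi>\Sigma_3$. Numerical fluxes: $\mathcal F_l=(\mathcal F^h,\mathcal F^{hu},\mathcal F_l^{h\sigma_{xx}},\mathcal F_l^{h\sigma_{zz}})$, $\mathcal F_r=(\mathcal F^h,\mathcal F^{hu},\mathcal F_r^{h\sigma_{xx}},\mathcal F_r^{h\sigma_{zz}})$, where $\mathcal F^h=hu$ and $\mathcal F^{hu}=hu^2+\pi$ evaluated in the self-similar solution at $\xi=0$; and, for $w=h\sigma_{xx}$ (resp. $w=h\sigma_{zz}$), $\mathcal F_l^{w}=(wu)_l+\min(0,\Sigma_1)(w_l^*-w_l)+\min(0,\Sigma_2)(w_r^*-w_l^* )+\min(0,\Sigma_3)(w_r-w_r^* )$ and $\mathcal F_r^{w}=(wu)_r-\max(0,\Sigma_1)(w_l^*-w_l)-\max(0,\Sigma_2)(w_r^*-w_l^* )-\max(0,\Sigma_3)(w_r-w_r^* )$. Mesh: cells $(x_{i-1/2},x_{i+1/2})$, $i\in\mathbb Z$,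 $\Delta x_i=x_{i+1/2}-x_{i-1/2}$, time step $\Delta t$; $A(q_l,q_r)=\max(|\Sigma_1|,|\Sigma_2|,|\Sigma_3|)$. *)

theory Defs
  imports "HOL-Analysis.Analysis"
begin

text \<open>States q = (h, hu, h sigma_xx, h sigma_zz).  Physical constants g, eta_p, lambda
  are passed explicitly as the parameters g eta lam.\<close>

type_synonym state = "real \<times> real \<times> real \<times> real"

definition hh :: "state \<Rightarrow> real" where "hh q = fst q"
definition hu :: "state \<Rightarrow> real" where "hu q = fst (snd q)"
definition hsxx :: "state \<Rightarrow> real" where "hsxx q = fst (snd (snd q))"
definition hszz :: "state \<Rightarrow> real" where "hszz q = snd (snd (snd q))"

definition vel :: "state \<Rightarrow> real" where "vel q = hu q / hh q"
definition sigxx :: "state \<Rightarrow> real" where "sigxx q = hsxx q / hh q"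
definition sigzz :: "state \<Rightarrow> real" where "sigzz q = hszz q / hh q"

definition admissible :: "state \<Rightarrow> bool" where
  "admissible q \<longleftrightarrow> hh q > 0 \<and> sigxx q > 0 \<and> sigzz q > 0"

definition pres :: "real \<Rightarrow> real \<Rightarrow> real \<Rightarrow> state \<Rightarrow> real" where
  "pres g eta lam q = g * hh q ^ 2 / 2 + eta / (2 * lam) * hh q * (sigzz q - sigxx q)"

text \<open>partial_h P at fixed s = (s_xx, s_zz)\<close>
definition dPdh :: "real \<Rightarrow> real \<Rightarrow> real \<Rightarrow> state \<Rightarrow> real" where
  "dPdh g eta lam q = g * hh q + eta / (2 * lam) * (3 * sigzz q + sigxx q)"

definition sound :: "real \<Rightarrow> real \<Rightarrow> real \<Rightarrow> state \<Rightarrow> real" where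
  "sound g eta lam q = sqrt (dPdh g eta lam q)"

definition s_xx :: "state \<Rightarrow> real" where "s_xx q = 1 / (sqrt (sigxx q) * hh q)"
definition s_zz :: "state \<Rightarrow> real" where "s_zz q = sqrt (sigzz q) / hh q"

definition energy :: "real \<Rightarrow> real \<Rightarrow> real \<Rightarrow> state \<Rightarrow> real" where
  "energy g eta lam q = hh q * vel q ^ 2 / 2 + g * hh q ^ 2 / 2
     + eta / (4 * lam) * hh q * (sigxx q + sigzz q - ln (sigxx q * sigzz q) - 2)"

definition energy_flux :: "real \<Rightarrow> real \<Rightarrow> real \<Rightarrow> state \<Rightarrow> real" where
  "energy_flux g eta lam q = (energy g eta lam q + pres g eta lam q) * vel q"

definition cL :: "real \<Rightarrow> real \<Rightarrow> real \<Rightarrow> state \<Rightarrow> state \<Rightarrow> real" where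
  "cL g eta lam ql qr = hh ql * (sound g eta lam ql
     + 2 * (max 0 (vel ql - vel qr)
            + max 0 (pres g eta lam qr - pres g eta lam ql)
              / (hh ql * sound g eta lam ql + hh qr * sound g eta lam qr)))"

definition cR :: "real \<Rightarrow> real \<Rightarrow> real \<Rightarrow> state \<Rightarrow> state \<Rightarrow> real" where
  "cR g eta lam ql qr = hh qr * (sound g eta lam qr
     + 2 * (max 0 (vel ql - vel qr)
            + max 0 (pres g eta lam ql - pres g eta lam qr)
              / (hh ql * sound g eta lam ql + hh qr * sound g eta lam qr)))"

definition ustar :: "real \<Rightarrow> real \<Rightarrow> real \<Rightarrow> state \<Rightarrow> state \<Rightarrow> real" where
  "ustar g eta lam ql qr =
     (let cl = cL g eta lam ql qr; cr = cR g eta lam ql qr in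
      (cl * vel ql + cr * vel qr + pres g eta lam ql - pres g eta lam qr) / (cl + cr))"

definition pistar :: "real \<Rightarrow> real \<Rightarrow> real \<Rightarrow> state \<Rightarrow> state \<Rightarrow> real" where
  "pistar g eta lam ql qr =
     (let cl = cL g eta lam ql qr; cr = cR g eta lam ql qr in
      (cr * pres g eta lam ql + cl * pres g eta lam qr - cl * cr * (vel qr - vel ql)) / (cl + cr))"

definition hLstar :: "real \<Rightarrow> real \<Rightarrow> real \<Rightarrow> state \<Rightarrow> state \<Rightarrow> real" where
  "hLstar g eta lam ql qr =
     (let cl = cL g eta lam ql qr; cr = cR g eta lam ql qr in
      1 / (1 / hh ql + (cr * (vel qr - vel ql) + pres g eta lam ql - pres g eta lam qr)
                       / (cl * (cl + cr))))"

definition hRstar :: "real \<Rightarrow> real \<Rightarrow> real \<Rightarrow> state \<Rightarrow> state \<Rightarrow> real" where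
  "hRstar g eta lam ql qr =
     (let cl = cL g eta lam ql qr; cr = cR g eta lam ql qr in
      1 / (1 / hh qr + (cl * (vel qr - vel ql) + pres g eta lam qr - pres g eta lam ql)
                       / (cr * (cl + cr))))"

definition qLstar :: "real \<Rightarrow> real \<Rightarrow> real \<Rightarrow> state \<Rightarrow> state \<Rightarrow> state" where
  "qLstar g eta lam ql qr =
     (let hs = hLstar g eta lam ql qr; us = ustar g eta lam ql qr in
      (hs, hs * us, hs * (sigxx ql * (hh ql / hs) ^ 2), hs * (sigzz ql * (hs / hh ql) ^ 2)))"

definition qRstar :: "real \<Rightarrow> real \<Rightarrow> real \<Rightarrow> state \<Rightarrow> state \<Rightarrow> state" where
  "qRstar g eta lam ql qr =
     (let hs = hRstar g eta lam ql qr; us = ustar g eta lam ql qr in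
      (hs, hs * us, hs * (sigxx qr * (hh qr / hs) ^ 2), hs * (sigzz qr * (hs / hh qr) ^ 2)))"

definition Sig1 :: "real \<Rightarrow> real \<Rightarrow> real \<Rightarrow> state \<Rightarrow> state \<Rightarrow> real" where
  "Sig1 g eta lam ql qr = vel ql - cL g eta lam ql qr / hh ql"
definition Sig2 :: "real \<Rightarrow> real \<Rightarrow> real \<Rightarrow> state \<Rightarrow> state \<Rightarrow> real" where
  "Sig2 g eta lam ql qr = ustar g eta lam ql qr"
definition Sig3 :: "real \<Rightarrow> real \<Rightarrow> real \<Rightarrow> state \<Rightarrow> state \<Rightarrow> real" where
  "Sig3 g eta lam ql qr = vel qr + cR g eta lam ql qr / hh qr"

text \<open>Value (state, pi) of the self-similar approximate solution at xi = 0.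
  At a wave of speed exactly 0 the state on its right is taken (the conservative
  fluxes h u and h u^2 + pi coincide on both sides there).\<close>
definition riem0 :: "real \<Rightarrow> real \<Rightarrow> real \<Rightarrow> state \<Rightarrow> state \<Rightarrow> state \<times> real" where
  "riem0 g eta lam ql qr =
     (if 0 < Sig1 g eta lam ql qr then (ql, pres g eta lam ql)
      else if 0 < Sig2 g eta lam ql qr then (qLstar g eta lam ql qr, pistar g eta lam ql qr)
      else if 0 < Sig3 g eta lam ql qr then (qRstar g eta lam ql qr, pistar g eta lam ql qr)
      else (qr, pres g eta lam qr))"

definition fluxH :: "real \<Rightarrow> real \<Rightarrow> real \<Rightarrow> state \<Rightarrow> state \<Rightarrow> real" where
  "fluxH g eta lam ql qr = hu (fst (riem0 g eta lam ql qr))"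

definition fluxHU :: "real \<Rightarrow> real \<Rightarrow> real \<Rightarrow> state \<Rightarrow> state \<Rightarrow> real" where
  "fluxHU g eta lam ql qr =
     (let (q0, p0) = riem0 g eta lam ql qr in hu q0 * vel q0 + p0)"

definition fluxLw :: "(state \<Rightarrow> real) \<Rightarrow> real \<Rightarrow> real \<Rightarrow> real \<Rightarrow> state \<Rightarrow> state \<Rightarrow> real" where
  "fluxLw w g eta lam ql qr =
     (let s1 = Sig1 g eta lam ql qr; s2 = Sig2 g eta lam ql qr; s3 = Sig3 g eta lam ql qr;
          qls = qLstar g eta lam ql qr; qrs = qRstar g eta lam ql qr in
      w ql * vel ql + min 0 s1 * (w qls - w ql) + min 0 s2 * (w qrs - w qls)
        + min 0 s3 * (w qr - w qrs))"

definition fluxRw :: "(state \<Rightarrow> real) \<Rightarrow> real \<Rightarrow> real \<Rightarrow> real \<Rightarrow> state \<Rightarrow> state \<Rightarrow> real" where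
  "fluxRw w g eta lam ql qr =
     (let s1 = Sig1 g eta lam ql qr; s2 = Sig2 g eta lam ql qr; s3 = Sig3 g eta lam ql qr;
          qls = qLstar g eta lam ql qr; qrs = qRstar g eta lam ql qr in
      w qr * vel qr - max 0 s1 * (w qls - w ql) - max 0 s2 * (w qrs - w qls)
        - max 0 s3 * (w qr - w qrs))"

definition fluxL :: "real \<Rightarrow> real \<Rightarrow> real \<Rightarrow> state \<Rightarrow> state \<Rightarrow> state" where
  "fluxL g eta lam ql qr = (fluxH g eta lam ql qr, fluxHU g eta lam ql qr,
      fluxLw hsxx g eta lam ql qr, fluxLw hszz g eta lam ql qr)"

definition fluxR :: "real \<Rightarrow> real \<Rightarrow> real \<Rightarrow> state \<Rightarrow> state \<Rightarrow> state" where
  "fluxR g eta lam ql qr = (fluxH g eta lam ql qr, fluxHU g eta lam ql qr,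
      fluxRw hsxx g eta lam ql qr, fluxRw hszz g eta lam ql qr)"

definition Amax :: "real \<Rightarrow> real \<Rightarrow> real \<Rightarrow> state \<Rightarrow> state \<Rightarrow> real" where
  "Amax g eta lam ql qr =
     max \<bar>Sig1 g eta lam ql qr\<bar> (max \<bar>Sig2 g eta lam ql qr\<bar> \<bar>Sig3 g eta lam ql qr\<bar>)"

text \<open>System written as  dt q + dx F(q) + B(q) dx q = 0  with
  F(q) = (hu, hu^2 + P, h sigma_xx u, h sigma_zz u) and
  B(q) dq = (0, 0, -2 h sigma_xx du, 2 h sigma_zz du), du = (d(hu) - u dh)/h.\<close>
definition phys_flux :: "real \<Rightarrow> real \<Rightarrow> real \<Rightarrow> state \<Rightarrow> state" where
  "phys_flux g eta lam q = (hu q, hu q * vel q + pres g eta lam q, hsxx q * vel q, hszz q * vel q)"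

definition ncB :: "state \<Rightarrow> state \<Rightarrow> state" where
  "ncB q dq = (let du = (hu dq - vel q * hh dq) / hh q in
               (0, 0, -2 * hsxx q * du, 2 * hszz q * du))"

definition scheme_step :: "real \<Rightarrow> real \<Rightarrow> real \<Rightarrow> (int \<Rightarrow> real) \<Rightarrow> real \<Rightarrow> (int \<Rightarrow> state) \<Rightarrow> int \<Rightarrow> state" where
  "scheme_step g eta lam dx dt q i =
     q i - (dt / dx i) *\<^sub>R (fluxL g eta lam (q i) (q (i + 1)) - fluxR g eta lam (q (i - 1)) (q i))"

definition CFL :: "real \<Rightarrow> real \<Rightarrow> real \<Rightarrow> (int \<Rightarrow> real) \<Rightarrow> real \<Rightarrow> (int \<Rightarrow> state) \<Rightarrow> bool" where
  "CFL g eta lam dx dt q \<longleftrightarrow>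
     (\<forall>i. dt * Amax g eta lam (q i) (q (i + 1)) \<le> min (dx i) (dx (i + 1)) / 2)"

definition step_setting :: "real \<Rightarrow> real \<Rightarrow> real \<Rightarrow> (int \<Rightarrow> real) \<Rightarrow> real \<Rightarrow> (int \<Rightarrow> state) \<Rightarrow> bool" where
  "step_setting g eta lam dx dt q \<longleftrightarrow>
     (\<forall>i. dx i > 0) \<and> dt > 0 \<and> (\<forall>i. admissible (q i)) \<and> CFL g eta lam dx dt q"

end

theory Submission
  imports Defs
begin

text \<open>Under the CFL condition the two half Riemann fans at the interfaces of a cell stay
  inside it, so the updated state is a convex combination of the data and of the intermediate
  states of these fans. Positivity of the intermediate states then gives positivity of the
  scheme. The outer waves transport \<open>s\<^sub>x\<^sub>x\<close> and \<open>s\<^sub>z\<^sub>z\<close>, whose sub- and superlevel sets are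
  convex in the conservative variables; this gives the maximum and minimum principles. The
  energy is convex in the conservative variables, so by Jensen's inequality the energy
  inequality reduces to the dissipation of energy across each outer wave. In Lagrangian
  coordinates that dissipation is \<open>c (e(\<tau>\<^sup>*) - e(\<tau>) + P (\<tau>\<^sup> * - \<tau>) - c\<^sup>2 (\<tau>\<^sup> * - \<tau>)\<^sup>2/2)\<close>
  along an isentrope of \<open>s\<close>, which is nonpositive because the relaxation speed \<open>c\<close> is
  large enough (subcharacteristic condition). On a steady contact the intermediate states
  coincide with the data. Consistency and sharpness follow from the continuity of the solver
  near the diagonal \<open>q\<^sub>l = q\<^sub>r\<close>, where it reduces to the exact characteristic structure.\<close>


section \<open>Convex combinations given by weighted lists\<close>

lemma weighted_sum_linear:
  assumes "linear f"
  shows "f (\<Sum>(w, y)\<leftarrow>xs. w *\<^sub>R y) = (\<Sum>(w, y)\<leftarrow>xs. w *\<^sub>R f y)"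
  by (induction xs) (auto simp: linear_add[OF assms] linear_scale[OF assms] linear_0[OF assms])

lemma weighted_sum_mono:
  fixes xs :: "(real \<times> 'a) list"
  assumes "\<forall>(w, y)\<in>set xs. 0 \<le> w \<and> f y \<le> F y"
  shows "(\<Sum>(w, y)\<leftarrow>xs. w * f y) \<le> (\<Sum>(w, y)\<leftarrow>xs. w * F y)"
  using assms by (induction xs) (auto intro!: add_mono mult_left_mono)

lemma weighted_sum_pos:
  fixes xs :: "(real \<times> 'a) list"
  assumes "\<forall>(w, y)\<in>set xs. 0 \<le> w \<and> 0 < f y" and "0 < (\<Sum>(w, y)\<leftarrow>xs. w)"
  shows "0 < (\<Sum>(w, y)\<leftarrow>xs. w * f y)"
  using assms
proof (induction xs)
  case (Cons p xs)
  obtain w y where p: "p = (w, y)" by fastforce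
  have "0 \<le> (\<Sum>(w, y)\<leftarrow>xs. w * f y)"
    using Cons.prems(1) by (intro sum_list_nonneg) (auto intro: less_imp_le)
  moreover have "0 \<le> w" "0 < f y" using Cons.prems(1) p by auto
  ultimately show ?case
    using Cons p by (cases "w = 0") (auto intro: add_pos_nonneg)
qed simp

lemma weighted_sum_above_affine:
  fixes xs :: "(real \<times> 'a::real_vector) list"
  assumes "linear l" and "\<forall>(w, y)\<in>set xs. 0 \<le> w \<and> a + l y \<le> F y"
    and "(\<Sum>(w, y)\<leftarrow>xs. w) = 1"
  shows "a + l (\<Sum>(w, y)\<leftarrow>xs. w *\<^sub>R y) \<le> (\<Sum>(w, y)\<leftarrow>xs. w * F y)"
proof -
  have "(\<Sum>(w, y)\<leftarrow>xs. w * (a + l y)) = a * (\<Sum>(w, y)\<leftarrow>xs. w) + (\<Sum>(w, y)\<leftarrow>xs. w * l y)"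
    by (induction xs) (auto simp: algebra_simps)
  also have "\<dots> = a + l (\<Sum>(w, y)\<leftarrow>xs. w *\<^sub>R y)"
    using assms(3) by (simp add: weighted_sum_linear[OF assms(1)])
  finally show ?thesis using weighted_sum_mono[of xs "\<lambda>y. a + l y" F] assms(2) by simp
qed

lemma relaxation_speed_bounds:
  fixes hl hr al ar ul ur Pl Pr :: real
  assumes pos: "hl > 0" "hr > 0" "al > 0" "ar > 0"
  defines "E0 \<equiv> hl*al + hr*ar"
  defines "Zl \<equiv> max 0 (ul - ur) + max 0 (Pr - Pl)/E0"
  defines "Zr \<equiv> max 0 (ul - ur) + max 0 (Pl - Pr)/E0"
  defines "cl \<equiv> hl*(al + 2*Zl)" and "cr \<equiv> hr*(ar + 2*Zr)"
  defines "us \<equiv> (cl*ul + cr*ur + Pl - Pr)/(cl + cr)"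
  shows "Zl \<ge> 0" "Zr \<ge> 0" "cl > 0" "cr > 0" "ul - us \<le> Zl" "us - ur \<le> Zr"
proof -
  have E0: "E0 > 0" using pos unfolding E0_def by (simp add: add_pos_pos)
  show Z: "Zl \<ge> 0" "Zr \<ge> 0" unfolding Zl_def Zr_def using E0 by auto
  have c1: "cl \<ge> hl*al" "cr \<ge> hr*ar" unfolding cl_def cr_def using Z pos
    by (simp_all add: algebra_simps)
  show c2: "cl > 0" "cr > 0" using c1 pos by (smt (verit) mult_pos_pos)+
  have sum: "cl + cr \<ge> E0" using c1 unfolding E0_def by simp
  have "ul - us = (cr*(ul - ur) + (Pr - Pl))/(cl + cr)"
    unfolding us_def using c2 by (simp add: field_simps)
  also have "\<dots> \<le> (cr*max 0 (ul - ur) + max 0 (Pr - Pl))/(cl + cr)"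
    using c2 by (intro divide_right_mono add_mono mult_left_mono) auto
  also have "\<dots> = cr/(cl + cr)*max 0 (ul - ur) + max 0 (Pr - Pl)/(cl + cr)"
    by (simp add: add_divide_distrib)
  also have "\<dots> \<le> 1*max 0 (ul - ur) + max 0 (Pr - Pl)/E0"
    using c2 E0 sum by (intro add_mono mult_right_mono divide_left_mono) auto
  finally show "ul - us \<le> Zl" unfolding Zl_def by simp
  have "us - ur = (cl*(ul - ur) + (Pl - Pr))/(cl + cr)"
    unfolding us_def using c2 by (simp add: field_simps)
  also have "\<dots> \<le> (cl*max 0 (ul - ur) + max 0 (Pl - Pr))/(cl + cr)"
    using c2 by (intro divide_right_mono add_mono mult_left_mono) auto
  also have "\<dots> = cl/(cl + cr)*max 0 (ul - ur) + max 0 (Pl - Pr)/(cl + cr)"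
    by (simp add: add_divide_distrib)
  also have "\<dots> \<le> 1*max 0 (ul - ur) + max 0 (Pl - Pr)/E0"
    using c2 E0 sum by (intro add_mono mult_right_mono divide_left_mono) auto
  finally show "us - ur \<le> Zr" unfolding Zr_def by simp
qed

lemma gravity_energy_defect_le:
  fixes h hs :: real
  assumes h: "h > 0" and hs: "hs > 0"
  shows "(hs - h)/2 + h^2/2*(1/hs - 1/h) \<le> (max h hs)^3 * (1/hs - 1/h)^2/2"
proof -
  define m where "m = max h hs"
  have m: "h \<le> m" "hs \<le> m" using h hs unfolding m_def by auto
  have "h^2 * hs \<le> m^2 * m" using m h hs by (intro mult_mono power_mono) auto
  then have "(h^2*hs) / (2*h^2*hs^2) \<le> m^3 / (2*h^2*hs^2)"
    using h hs by (intro divide_right_mono) (auto simp: power3_eq_cube power2_eq_square)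
  then have "1/(2*hs) \<le> m^3/(2*h^2*hs^2)" using h hs by (simp add: field_simps power2_eq_square)
  then have "(hs - h)^2 * (1/(2*hs)) \<le> (hs - h)^2 * (m^3/(2*h^2*hs^2))"
    by (rule mult_left_mono) simp
  moreover have "(hs - h)/2 + h^2/2*(1/hs - 1/h) = (hs - h)^2 * (1/(2*hs))"
    using h hs by (simp add: field_simps power2_eq_square)
  moreover have "m^3 * (1/hs - 1/h)^2/2 = (hs - h)^2 * (m^3/(2*h^2*hs^2))"
    using h hs by (simp add: field_simps power2_eq_square)
  ultimately show ?thesis unfolding m_def by simp
qed

lemma zz_energy_defect_le:
  fixes h hs :: real
  assumes h: "h > 0" and hs: "hs > 0"
  shows "(hs/h)^2 - 1 + 2*h*(1/hs - 1/h) \<le> 3*(max h hs)^4/h^2*(1/hs - 1/h)^2"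
proof -
  define m where "m = max h hs"
  have m: "h \<le> m" "hs \<le> m" using h hs unfolding m_def by auto
  have "(hs + 2*h) * (h^2 * hs) \<le> (3*m) * (m^2*m)"
    using m h hs by (intro mult_mono power_mono) auto
  then have "((hs + 2*h) * h^2 * hs) / (h^4*hs^2) \<le> 3*m^4 / (h^4*hs^2)"
    using h hs by (intro divide_right_mono) (auto simp: power2_eq_square power4_eq_xxxx algebra_simps)
  moreover have "((hs + 2*h) * h^2 * hs) / (h^4*hs^2) = (hs + 2*h)/(h^2*hs)"
    using h hs by (simp add: field_simps power2_eq_square power4_eq_xxxx)
  ultimately have "(hs - h)^2 * ((hs + 2*h)/(h^2*hs)) \<le> (hs - h)^2 * (3*m^4/(h^4*hs^2))"
    by (intro mult_left_mono) simp_all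
  moreover have "(hs/h)^2 - 1 + 2*h*(1/hs - 1/h) = (hs - h)^2 * ((hs + 2*h)/(h^2*hs))"
    using h hs by (simp add: field_simps power2_eq_square)
  moreover have "3*m^4/h^2*(1/hs - 1/h)^2 = (hs - h)^2 * (3*m^4/(h^4*hs^2))"
    using h hs by (simp add: field_simps power2_eq_square power4_eq_xxxx)
  ultimately show ?thesis unfolding m_def by simp
qed

text \<open>Across a wave that transports \<open>s_xx\<close> and \<open>s_zz\<close>, the specific internal energy
  \<open>e = g h/2 + K (\<sigma>\<^sub>x\<^sub>x + \<sigma>\<^sub>z\<^sub>z - ln (\<sigma>\<^sub>x\<^sub>x \<sigma>\<^sub>z\<^sub>z) - 2)\<close> is a function of
  \<open>\<tau> = 1/h\<close> alone, and this is its second order Taylor bound in \<open>\<tau>\<close> with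
  \<open>- \<partial>e/\<partial>\<tau> = P\<close>.\<close>
lemma internal_energy_defect_le:
  fixes g K h hs sx sz :: real
  assumes "g > 0" "K > 0" "h > 0" "hs > 0" "sx > 0" "sz > 0"
  defines "d \<equiv> 1/hs - 1/h" and "m \<equiv> max h hs"
  shows "g*(hs - h)/2 + K*(sx*(h/hs)^2 + sz*(hs/h)^2 - sx - sz) + (g*h^2/2 + 2*K*h*(sz - sx))*d
      \<le> (g*m^3 + 6*K * sz*m^4/h^2 + 2*K * sx*h^2) * d^2 / 2"
proof -
  have "g*(hs - h)/2 + K*(sx*(h/hs)^2 + sz*(hs/h)^2 - sx - sz) + (g*h^2/2 + 2*K*h*(sz - sx))*d
      = g*((hs - h)/2 + h^2/2*d) + K * sx*(h^2*d^2) + K * sz*((hs/h)^2 - 1 + 2*h*d)"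
    using assms unfolding d_def by (simp add: field_simps power2_eq_square)
  also have "\<dots> \<le> g*(m^3*d^2/2) + K * sx*(h^2*d^2) + K * sz*(3*m^4/h^2*d^2)"
    using gravity_energy_defect_le zz_energy_defect_le assms unfolding d_def m_def
    by (intro add_mono mult_left_mono) auto
  also have "\<dots> = (g*m^3 + 6*K * sz*m^4/h^2 + 2*K * sx*h^2) * d^2 / 2"
    by (simp add: field_simps)
  finally show ?thesis .
qed

lemma expansion_ratio_bound:
  fixes a Z r :: real
  assumes "a > 0" "Z \<ge> 0" "r \<ge> 0" "(a + Z)*r \<le> a + 2*Z"
  shows "r^2 * a \<le> a + 2*Z"
proof -
  have "((a + Z)*r)^2 * a \<le> (a + 2*Z)^2 * a"
    using assms by (intro mult_right_mono power_mono) auto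
  also have "\<dots> \<le> (a + 2*Z) * (a + Z)^2"
  proof -
    have "(a + 2*Z)*a \<le> (a + Z)^2" by (simp add: power2_eq_square algebra_simps)
    then show ?thesis using assms by (simp add: power2_eq_square mult.assoc mult_left_mono)
  qed
  finally have "(r^2 * a) * (a + Z)^2 \<le> (a + 2*Z) * (a + Z)^2"
    by (simp add: power_mult_distrib ac_simps)
  then show ?thesis using assms by (simp add: mult_le_cancel_right)
qed

lemma subcharacteristic_condition:
  fixes g K h hs a Z c sx sz :: real
  assumes pos: "g > 0" "K > 0" "h > 0" "hs > 0" "a > 0" "Z \<ge> 0" "sx > 0" "sz > 0"
    and c: "c = h*(a + 2*Z)" and hs_le: "(a + Z)*hs \<le> c"
    and a2: "a^2 = g*h + 2*K*(3 * sz + sx)"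
  shows "g*(max h hs)^3 + 6*K * sz*(max h hs)^4/h^2 + 2*K * sx*h^2 \<le> c^2"
proof (cases "hs \<le> h")
  case True
  then have "g*(max h hs)^3 + 6*K * sz*(max h hs)^4/h^2 + 2*K * sx*h^2 = (h*a)^2"
    using pos(3) unfolding a2 power_mult_distrib
    by (simp add: field_simps power2_eq_square power3_eq_cube power4_eq_xxxx)
  also have "\<dots> \<le> c^2" using c pos by (intro power_mono) (auto simp: algebra_simps)
  finally show ?thesis .
next
  case False
  define r where "r = hs / h"
  have r: "r \<ge> 1" "hs = r*h" using False pos unfolding r_def by auto
  have "(a + Z)*r \<le> a + 2*Z"
    using hs_le pos unfolding c r(2) by (simp add: mult.assoc mult.left_commute[of h])
  then have r2a: "r^2 * a \<le> a + 2*Z" using expansion_ratio_bound pos r by simp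
  have "g*hs^3 \<le> r^4 * (g*h^3)"
  proof -
    have "g*h^3*r^3 \<le> g*h^3*r^4" using r pos by (intro mult_left_mono power_increasing) auto
    then show ?thesis unfolding r(2) by (simp add: power_mult_distrib algebra_simps)
  qed
  moreover have "1 * (2*K * sx*h^2) \<le> r^4 * (2*K * sx*h^2)"
    using r pos by (intro mult_right_mono one_le_power) auto
  moreover have "6*K * sz*hs^4/h^2 = r^4 * (6*K * sz*h^2)"
    unfolding r(2) using pos by (simp add: field_simps power2_eq_square power4_eq_xxxx)
  ultimately have "g*(max h hs)^3 + 6*K * sz*(max h hs)^4/h^2 + 2*K * sx*h^2
      \<le> r^4 * (g*h^3 + 6*K * sz*h^2 + 2*K * sx*h^2)"
    using False by (simp add: algebra_simps)
  also have "\<dots> = h^2 * (r^2*a)^2"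
    unfolding a2 power_mult_distrib
    by (simp add: algebra_simps power2_eq_square power3_eq_cube power4_eq_xxxx)
  also have "\<dots> \<le> h^2 * (a + 2*Z)^2"
    using r2a pos by (intro mult_left_mono power_mono) auto
  finally show ?thesis unfolding c by (simp add: power_mult_distrib)
qed

text \<open>A single wave of speed \<open>S\<close> carries \<open>(h, u, \<sigma>\<^sub>x\<^sub>x, \<sigma>\<^sub>z\<^sub>z)\<close> to a state of depth \<open>hs\<close>,
  velocity \<open>us\<close> and relaxation pressure \<open>P - c (us - u)\<close>. In Lagrangian form the energy
  balance is \<open>c (e\<^sub>s - e + P d - c\<^sup>2 d\<^sup>2/2)\<close> with \<open>d = 1/hs - 1/h\<close>; the logarithmic term \<open>L\<close>
  of the energy is the same on both sides.\<close>
lemma wave_energy_dissipation: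
  fixes g K h hs u us S c sx sz L :: real
  assumes pos: "g > 0" "K > 0" "h > 0" "hs > 0" "c > 0" "sx > 0" "sz > 0"
    and c1: "c = h*(u - S)" and c2: "c = hs*(us - S)"
    and M: "g*(max h hs)^3 + 6*K * sz*(max h hs)^4/h^2 + 2*K * sx*h^2 \<le> c^2"
  defines "E \<equiv> h*u^2/2 + g*h^2/2 + K*h*(sx + sz - L - 2)"
    and "Es \<equiv> hs*us^2/2 + g*hs^2/2 + K*hs*(sx*(h/hs)^2 + sz*(hs/h)^2 - L - 2)"
    and "P \<equiv> g*h^2/2 + 2*K*h*(sz - sx)"
  shows "(Es + (P - c*(us - u)))*us - (E + P)*u - S*(Es - E) \<le> 0"
proof -
  define e where "e = g*h/2 + K*(sx + sz - L - 2)"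
  define es where "es = g*hs/2 + K*(sx*(h/hs)^2 + sz*(hs/h)^2 - L - 2)"
  define d where "d = 1/hs - 1/h"
  have "us - S = c/hs" "u - S = c/h" using c1 c2 pos by (simp_all add: field_simps)
  then have du: "us - u = c*d" unfolding d_def by (simp add: algebra_simps)
  have E: "E = h*(u^2/2 + e)" and Es: "Es = hs*(us^2/2 + es)"
    unfolding E_def Es_def e_def es_def by (simp_all add: algebra_simps power2_eq_square)
  have "(Es + (P - c*(us - u)))*us - (E + P)*u - S*(Es - E)
      = (hs*(us - S))*(us^2/2 + es) - (h*(u - S))*(u^2/2 + e) + P*(us - u) - c*(us - u)*us"
    unfolding E Es by (simp add: field_simps power2_eq_square)
  also have "\<dots> = c*(es - e + P*d - c^2*d^2/2)"
    unfolding c1[symmetric] c2[symmetric] using du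
    by (simp add: field_simps power2_eq_square)
  also have "\<dots> \<le> 0"
  proof -
    have "es - e + P*d \<le> (g*(max h hs)^3 + 6*K * sz*(max h hs)^4/h^2 + 2*K * sx*h^2) * d^2 / 2"
    proof -
      have "es - e = g*(hs - h)/2 + K*(sx*(h/hs)^2 + sz*(hs/h)^2 - sx - sz)"
        unfolding es_def e_def by (simp add: field_simps)
      then show ?thesis
        using internal_energy_defect_le[OF pos(1-4,6,7)] unfolding P_def d_def by simp
    qed
    also have "\<dots> \<le> c^2 * d^2 / 2"
      using M by (intro divide_right_mono mult_right_mono) auto
    finally show ?thesis using pos(5) by (simp add: mult_nonneg_nonpos)
  qed
  finally show ?thesis .
qed

text \<open>The energy, as a function of the conservative variables \<open>(h, hu, h\<sigma>\<^sub>x\<^sub>x, h\<sigma>\<^sub>z\<^sub>z)\<close>,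
  lies above its tangent plane at \<open>(H, HU, HS\<^sub>x, HS\<^sub>z)\<close>.\<close>
lemma energy_density_above_tangent:
  fixes g K h u sx sz H U Sx Sz :: real
  assumes pos: "g \<ge> 0" "K \<ge> 0" "h > 0" "sx > 0" "sz > 0" "H > 0" "Sx > 0" "Sz > 0"
  shows "H*U^2/2 + g*H^2/2 + K*H*(Sx + Sz - ln (Sx*Sz) - 2)
    + (g*H - U^2/2 - K*(ln Sx + ln Sz))*(h - H) + U*(h*u - H*U) + K*(1 - 1/Sx)*(h * sx - H*Sx)
    + K*(1 - 1/Sz)*(h * sz - H*Sz)
    \<le> h*u^2/2 + g*h^2/2 + K*h*(sx + sz - ln (sx * sz) - 2)"
proof -
  have lx: "ln sx - ln Sx \<le> sx/Sx - 1" using ln_le_minus_one[of "sx/Sx"] pos by (simp add: ln_div)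
  have lz: "ln sz - ln Sz \<le> sz/Sz - 1" using ln_le_minus_one[of "sz/Sz"] pos by (simp add: ln_div)
  have "(h*u^2/2 + g*h^2/2 + K*h*(sx + sz - (ln sx + ln sz) - 2)) -
    (H*U^2/2 + g*H^2/2 + K*H*(Sx + Sz - (ln Sx + ln Sz) - 2)
    + (g*H - U^2/2 - K*(ln Sx + ln Sz))*(h - H) + U*(h*u - H*U) + K*(1 - 1/Sx)*(h * sx - H*Sx)
    + K*(1 - 1/Sz)*(h * sz - H*Sz))
    = h*(u - U)^2/2 + g*(h - H)^2/2 + K*h*((sx/Sx - 1) - (ln sx - ln Sx))
      + K*h*((sz/Sz - 1) - (ln sz - ln Sz))"
    using pos by (simp add: field_simps power2_eq_square)
  moreover have "0 \<le> h*(u - U)^2/2 + g*(h - H)^2/2 + K*h*((sx/Sx - 1) - (ln sx - ln Sx))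
      + K*h*((sz/Sz - 1) - (ln sz - ln Sz))"
    using pos lx lz by (intro add_nonneg_nonneg mult_nonneg_nonneg) auto
  ultimately show ?thesis using pos by (simp add: ln_mult)
qed

lemma reciprocal_above_tangent:
  fixes x H :: real
  assumes "x > 0" "H > 0"
  shows "2/H - x/H^2 \<le> 1/x"
proof -
  have "2*x*H - x^2 \<le> H^2" using zero_le_power2[of "x - H"] by (simp add: power2_diff)
  then show ?thesis using assms by (simp add: field_simps power2_eq_square)
qed

lemma cube_above_tangent:
  fixes x H :: real
  assumes "x > 0" "H > 0"
  shows "3*H^2*x - 2*H^3 \<le> x^3"
proof -
  have "x^3 - (3*H^2*x - 2*H^3) = (x - H)^2 * (x + 2*H)"
    by (simp add: power2_eq_square power3_eq_cube algebra_simps)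
  moreover have "0 \<le> (x - H)^2 * (x + 2*H)" using assms by simp
  ultimately show ?thesis by linarith
qed

lemma fan_jump_identity:
  fixes hl hls hr hrs ul ur us S1 S3 cl cr a a' b b' :: real
  assumes "hl*(ul - S1) = cl" "hls*(us - S1) = cl" "hr*(S3 - ur) = cr" "hrs*(S3 - us) = cr"
  shows "(hr*b*ur - hl*a*ul) - (S1*(hls*a' - hl*a) + us*(hrs*b' - hls*a') + S3*(hr*b - hrs*b'))
       = cl*(a' - a) + cr*(b' - b)"
proof -
  have "(hr*b*ur - hl*a*ul) - (S1*(hls*a' - hl*a) + us*(hrs*b' - hls*a') + S3*(hr*b - hrs*b'))
      = a'*(hls*(us - S1)) - a*(hl*(ul - S1)) + b'*(hrs*(S3 - us)) - b*(hr*(S3 - ur))"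
    by (simp add: algebra_simps)
  then show ?thesis unfolding assms by (simp add: algebra_simps)
qed

lemma upwind_select_eq:
  fixes S1 S2 S3 p0 p1 p2 p3 f0 f1 f2 f3 :: real
  assumes "S1 < S2" "S2 < S3"
    and "S1*(p1 - p0) = f1 - f0" "S2*(p2 - p1) = f2 - f1" "S3*(p3 - p2) = f3 - f2"
  shows "(if 0 < S1 then f0 else if 0 < S2 then f1 else if 0 < S3 then f2 else f3)
         = f0 + min 0 S1*(p1 - p0) + min 0 S2*(p2 - p1) + min 0 S3*(p3 - p2)"
    "(if 0 < S1 then f0 else if 0 < S2 then f1 else if 0 < S3 then f2 else f3)
         = f3 - max 0 S1*(p1 - p0) - max 0 S2*(p2 - p1) - max 0 S3*(p3 - p2)"
  using assms by (auto simp: min_def max_def)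

lemma tendsto_inner_div_norm:
  fixes C D :: "'a \<Rightarrow> 'b::real_inner"
  assumes "(C \<longlongrightarrow> 0) F"
  shows "((\<lambda>x. inner (C x) (D x) / norm (D x)) \<longlongrightarrow> 0) F"
proof (rule tendsto_0_le[OF assms, of _ 1])
  show "\<forall>\<^sub>F x in F. norm (inner (C x) (D x) / norm (D x)) \<le> norm (C x) * 1"
  proof (rule always_eventually, rule allI)
    fix x
    have "\<bar>inner (C x) (D x)\<bar> \<le> norm (C x) * norm (D x)" by (rule Cauchy_Schwarz_ineq2)
    then show "norm (inner (C x) (D x) / norm (D x)) \<le> norm (C x) * 1"
      by (cases "D x = 0") (simp_all add: divide_le_eq abs_div)
  qed
qed

lemma tendsto_wave_coefficient:
  fixes a v :: "'a \<Rightarrow> 'b::real_normed_vector"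
  assumes "(kl \<longlongrightarrow> \<kappa>) F" "(kr \<longlongrightarrow> \<kappa>) F" "(a \<longlongrightarrow> a0) F" "(v \<longlongrightarrow> v0) F"
  shows "((\<lambda>x. kl x *\<^sub>R a x + kr x *\<^sub>R (v x - a x) - \<kappa> *\<^sub>R v0) \<longlongrightarrow> 0) F"
proof -
  have "((\<lambda>x. kl x *\<^sub>R a x + kr x *\<^sub>R (v x - a x) - \<kappa> *\<^sub>R v0) \<longlongrightarrow> \<kappa> *\<^sub>R a0 + \<kappa> *\<^sub>R (v0 - a0) - \<kappa> *\<^sub>R v0) F"
    using assms by (intro tendsto_intros)
  then show ?thesis by (simp add: algebra_simps)
qed

lemma admissible_iff: "admissible q \<longleftrightarrow> hh q > 0 \<and> hsxx q > 0 \<and> hszz q > 0"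
  unfolding admissible_def sigxx_def sigzz_def by (auto simp: zero_less_divide_iff)

lemma admissible_conservative:
  assumes "admissible q"
  shows "hu q = hh q * vel q" "hsxx q = hh q * sigxx q" "hszz q = hh q * sigzz q"
  using assms by (simp_all add: admissible_def vel_def sigxx_def sigzz_def)

lemma state_eqI: "hh x = hh y \<Longrightarrow> hu x = hu y \<Longrightarrow> hsxx x = hsxx y \<Longrightarrow> hszz x = hszz y \<Longrightarrow> x = y"
  unfolding hh_def hu_def hsxx_def hszz_def by (simp add: prod_eq_iff)

lemma components_tuple:
  "hh (a, b, c, d) = a" "hu (a, b, c, d) = b" "hsxx (a, b, c, d) = c" "hszz (a, b, c, d) = d"
  by (simp_all add: hh_def hu_def hsxx_def hszz_def)

lemma components_add:
  "hh (p + q) = hh p + hh q" "hu (p + q) = hu p + hu q"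
  "hsxx (p + q) = hsxx p + hsxx q" "hszz (p + q) = hszz p + hszz q"
  by (simp_all add: hh_def hu_def hsxx_def hszz_def)

lemma components_diff:
  "hh (p - q) = hh p - hh q" "hu (p - q) = hu p - hu q"
  "hsxx (p - q) = hsxx p - hsxx q" "hszz (p - q) = hszz p - hszz q"
  by (simp_all add: hh_def hu_def hsxx_def hszz_def)

lemma inner_state:
  "inner p q = hh p * hh q + hu p * hu q + hsxx p * hsxx q + hszz p * hszz q"
  by (cases p, cases q) (simp add: hh_def hu_def hsxx_def hszz_def)

lemma linear_components: "linear hh" "linear hu" "linear hsxx" "linear hszz"
  by (auto intro!: linearI simp: hh_def hu_def hsxx_def hszz_def)

lemma isCont_components [continuous_intros]:
  "isCont f x \<Longrightarrow> isCont (\<lambda>p. hh (f p)) x" "isCont f x \<Longrightarrow> isCont (\<lambda>p. hu (f p)) x"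
  "isCont f x \<Longrightarrow> isCont (\<lambda>p. hsxx (f p)) x" "isCont f x \<Longrightarrow> isCont (\<lambda>p. hszz (f p)) x"
  unfolding hh_def hu_def hsxx_def hszz_def by (intro isCont_fst isCont_snd; assumption)+

lemma isCont_primitive [continuous_intros]:
  "isCont f x \<Longrightarrow> hh (f x) \<noteq> 0 \<Longrightarrow> isCont (\<lambda>p. vel (f p)) x"
  "isCont f x \<Longrightarrow> hh (f x) \<noteq> 0 \<Longrightarrow> isCont (\<lambda>p. sigxx (f p)) x"
  "isCont f x \<Longrightarrow> hh (f x) \<noteq> 0 \<Longrightarrow> isCont (\<lambda>p. sigzz (f p)) x"
  unfolding vel_def sigxx_def sigzz_def by (intro continuous_intros; assumption)+

lemma eventually_admissible_near:
  assumes "admissible q"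
  shows "eventually (\<lambda>p. admissible (fst p) \<and> admissible (snd p)) (at (q, q))"
proof -
  have pos: "eventually (\<lambda>p. 0 < f p) (at (q, q))" if "isCont f (q, q)" "f (q, q) > 0"
    for f :: "state \<times> state \<Rightarrow> real"
    using that by (intro order_tendstoD(1)) (auto simp: isCont_def)
  have "isCont (\<lambda>p::state \<times> state. hh (fst p)) (q, q)" "isCont (\<lambda>p::state \<times> state. hsxx (fst p)) (q, q)"
    "isCont (\<lambda>p::state \<times> state. hszz (fst p)) (q, q)" "isCont (\<lambda>p::state \<times> state. hh (snd p)) (q, q)"
    "isCont (\<lambda>p::state \<times> state. hsxx (snd p)) (q, q)" "isCont (\<lambda>p::state \<times> state. hszz (snd p)) (q, q)"
    by (auto intro!: continuous_intros)
  then have "eventually (\<lambda>p::state \<times> state. (0 < hh (fst p) \<and> 0 < hsxx (fst p) \<and> 0 < hszz (fst p))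
      \<and> (0 < hh (snd p) \<and> 0 < hsxx (snd p) \<and> 0 < hszz (snd p))) (at (q, q))"
    using assms unfolding admissible_iff by (intro eventually_conj pos) simp_all
  then show ?thesis by (rule eventually_mono) (simp add: admissible_iff)
qed

definition vel_jump_coeff :: "state \<Rightarrow> state \<Rightarrow> state" where
  "vel_jump_coeff ql qr = (- vel ql / hh qr, 1 / hh qr, 0, 0)"

lemma vel_jump_linear:
  assumes "admissible ql" "admissible qr"
  shows "vel qr - vel ql = inner (vel_jump_coeff ql qr) (qr - ql)"
  using assms unfolding vel_jump_coeff_def inner_state
  by (simp add: components_tuple components_diff admissible_conservative admissible_def field_simps)

section \<open>The relaxation Riemann solver\<close>

locale relaxation_solver =
  fixes g eta lam :: real
  assumes g_pos: "g > 0" and eta_pos: "eta > 0" and lam_pos: "lam > 0"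
begin

abbreviation "PP \<equiv> pres g eta lam"
abbreviation "aa \<equiv> sound g eta lam"
abbreviation "EE \<equiv> energy g eta lam"
abbreviation "cl \<equiv> cL g eta lam"
abbreviation "cr \<equiv> cR g eta lam"
abbreviation "us \<equiv> ustar g eta lam"
abbreviation "pis \<equiv> pistar g eta lam"
abbreviation "hls \<equiv> hLstar g eta lam"
abbreviation "hrs \<equiv> hRstar g eta lam"
abbreviation "QL \<equiv> qLstar g eta lam"
abbreviation "QR \<equiv> qRstar g eta lam"
abbreviation "S1 \<equiv> Sig1 g eta lam"
abbreviation "S2 \<equiv> Sig2 g eta lam"
abbreviation "S3 \<equiv> Sig3 g eta lam"

lemma sound_sq:
  assumes "admissible q"
  shows "aa q ^ 2 = g * hh q + eta/(2*lam) * (3 * sigzz q + sigxx q)"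
    and "aa q > 0"
proof -
  have "0 < eta/(2*lam) * (3 * sigzz q + sigxx q)"
    using assms eta_pos lam_pos by (simp add: admissible_def)
  moreover have "0 < g * hh q" using assms g_pos by (simp add: admissible_def)
  ultimately have "dPdh g eta lam q > 0" unfolding dPdh_def by linarith
  then show "aa q ^ 2 = g * hh q + eta/(2*lam) * (3 * sigzz q + sigxx q)" "aa q > 0"
    unfolding sound_def dPdh_def by simp_all
qed

lemma relaxation_speeds:
  assumes "admissible ql" "admissible qr"
  shows "cl ql qr > 0" "cr ql qr > 0"
    "\<exists>Z\<ge>0. cl ql qr = hh ql * (aa ql + 2*Z) \<and> vel ql - us ql qr \<le> Z"
    "\<exists>Z\<ge>0. cr ql qr = hh qr * (aa qr + 2*Z) \<and> us ql qr - vel qr \<le> Z"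
proof -
  note bounds = relaxation_speed_bounds[where ul = "vel ql" and ur = "vel qr"
      and Pl = "PP ql" and Pr = "PP qr"]
  have pos: "hh ql > 0" "hh qr > 0" "aa ql > 0" "aa qr > 0"
    using assms sound_sq(2) by (auto simp: admissible_def)
  show "cl ql qr > 0" "cr ql qr > 0"
    using bounds[OF pos] unfolding cL_def cR_def by blast+
  show "\<exists>Z\<ge>0. cl ql qr = hh ql * (aa ql + 2*Z) \<and> vel ql - us ql qr \<le> Z"
    "\<exists>Z\<ge>0. cr ql qr = hh qr * (aa qr + 2*Z) \<and> us ql qr - vel qr \<le> Z"
    using bounds[OF pos] unfolding cL_def cR_def ustar_def Let_def by blast+
qed

lemma star_formulas:
  assumes "admissible ql" "admissible qr"
  shows "us ql qr - vel ql = (cr ql qr*(vel qr - vel ql) + PP ql - PP qr)/(cl ql qr + cr ql qr)"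
    "us ql qr - vel qr = (cl ql qr*(vel ql - vel qr) + PP ql - PP qr)/(cl ql qr + cr ql qr)"
    "pis ql qr = PP ql - cl ql qr * (us ql qr - vel ql)"
    "pis ql qr = PP qr + cr ql qr * (us ql qr - vel qr)"
    "1 / hls ql qr = 1 / hh ql + (us ql qr - vel ql) / cl ql qr"
    "1 / hrs ql qr = 1 / hh qr - (us ql qr - vel qr) / cr ql qr"
proof -
  define c1 where "c1 = cl ql qr"
  define c2 where "c2 = cr ql qr"
  have c: "c1 > 0" "c2 > 0" using relaxation_speeds[OF assms] unfolding c1_def c2_def by auto
  have usd: "us ql qr = (c1 * vel ql + c2 * vel qr + PP ql - PP qr)/(c1 + c2)"
    unfolding ustar_def c1_def c2_def Let_def by simp
  show e1: "us ql qr - vel ql = (cr ql qr*(vel qr - vel ql) + PP ql - PP qr)/(cl ql qr + cr ql qr)"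
    using c unfolding usd c1_def[symmetric] c2_def[symmetric] by (simp add: field_simps)
  show e2: "us ql qr - vel qr = (cl ql qr*(vel ql - vel qr) + PP ql - PP qr)/(cl ql qr + cr ql qr)"
    using c unfolding usd c1_def[symmetric] c2_def[symmetric] by (simp add: field_simps)
  show "pis ql qr = PP ql - cl ql qr * (us ql qr - vel ql)"
    using c unfolding pistar_def Let_def e1 c1_def[symmetric] c2_def[symmetric]
    by (simp add: field_simps)
  show "pis ql qr = PP qr + cr ql qr * (us ql qr - vel qr)"
    using c unfolding pistar_def Let_def e2 c1_def[symmetric] c2_def[symmetric]
    by (simp add: field_simps)
  show "1 / hls ql qr = 1 / hh ql + (us ql qr - vel ql) / cl ql qr"
    using c unfolding hLstar_def Let_def e1 c1_def[symmetric] c2_def[symmetric]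
    by (simp add: field_simps)
  show "1 / hrs ql qr = 1 / hh qr - (us ql qr - vel qr) / cr ql qr"
    using c unfolding hRstar_def Let_def e2 c1_def[symmetric] c2_def[symmetric]
    by (simp add: field_simps) (simp add: add_divide_distrib[symmetric])
qed

lemma star_depth_bounds:
  assumes "admissible ql" "admissible qr"
  shows "\<exists>Z\<ge>0. cl ql qr = hh ql * (aa ql + 2*Z) \<and> (aa ql + Z) / cl ql qr \<le> 1 / hls ql qr"
    "\<exists>Z\<ge>0. cr ql qr = hh qr * (aa qr + 2*Z) \<and> (aa qr + Z) / cr ql qr \<le> 1 / hrs ql qr"
proof -
  have h: "hh ql > 0" "hh qr > 0" using assms by (auto simp: admissible_def)
  have c: "cl ql qr > 0" "cr ql qr > 0" using relaxation_speeds[OF assms] by auto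
  obtain Z1 where Z1: "Z1 \<ge> 0" "cl ql qr = hh ql * (aa ql + 2*Z1)" "vel ql - us ql qr \<le> Z1"
    using relaxation_speeds(3)[OF assms] by blast
  obtain Z2 where Z2: "Z2 \<ge> 0" "cr ql qr = hh qr * (aa qr + 2*Z2)" "us ql qr - vel qr \<le> Z2"
    using relaxation_speeds(4)[OF assms] by blast
  have "1 / hh ql = (aa ql + 2*Z1) / cl ql qr" using h c Z1(2) by (simp add: field_simps)
  then have "(aa ql + Z1) / cl ql qr = 1 / hh ql - Z1 / cl ql qr" by (simp add: diff_divide_distrib[symmetric])
  also have "\<dots> \<le> 1 / hls ql qr"
    unfolding star_formulas(5)[OF assms]
    using divide_right_mono[of "- Z1" "us ql qr - vel ql" "cl ql qr"] Z1(3) c by simp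
  finally show "\<exists>Z\<ge>0. cl ql qr = hh ql * (aa ql + 2*Z) \<and> (aa ql + Z) / cl ql qr \<le> 1 / hls ql qr"
    using Z1 by blast
  have "1 / hh qr = (aa qr + 2*Z2) / cr ql qr" using h c Z2(2) by (simp add: field_simps)
  then have "(aa qr + Z2) / cr ql qr = 1 / hh qr - Z2 / cr ql qr" by (simp add: diff_divide_distrib[symmetric])
  also have "\<dots> \<le> 1 / hrs ql qr"
    unfolding star_formulas(6)[OF assms]
    using divide_right_mono[of "us ql qr - vel qr" Z2 "cr ql qr"] Z2(3) c by simp
  finally show "\<exists>Z\<ge>0. cr ql qr = hh qr * (aa qr + 2*Z) \<and> (aa qr + Z) / cr ql qr \<le> 1 / hrs ql qr"
    using Z2 by blast
qed

lemma star_depths_pos: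
  assumes "admissible ql" "admissible qr"
  shows "hls ql qr > 0" "hrs ql qr > 0"
proof -
  have a: "aa ql > 0" "aa qr > 0" using assms sound_sq(2) by auto
  have c: "cl ql qr > 0" "cr ql qr > 0" using relaxation_speeds[OF assms] by auto
  obtain Z1 where "Z1 \<ge> 0" "(aa ql + Z1) / cl ql qr \<le> 1 / hls ql qr"
    using star_depth_bounds(1)[OF assms] by blast
  then have "0 < 1 / hls ql qr" using a c by (smt (verit) divide_pos_pos)
  then show "hls ql qr > 0" by simp
  obtain Z2 where "Z2 \<ge> 0" "(aa qr + Z2) / cr ql qr \<le> 1 / hrs ql qr"
    using star_depth_bounds(2)[OF assms] by blast
  then have "0 < 1 / hrs ql qr" using a c by (smt (verit) divide_pos_pos)
  then show "hrs ql qr > 0" by simp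
qed

lemma wave_speeds:
  assumes "admissible ql" "admissible qr"
  shows "hh ql * (vel ql - S1 ql qr) = cl ql qr" "hls ql qr * (us ql qr - S1 ql qr) = cl ql qr"
    "hh qr * (S3 ql qr - vel qr) = cr ql qr" "hrs ql qr * (S3 ql qr - us ql qr) = cr ql qr"
    "S1 ql qr < S2 ql qr" "S2 ql qr < S3 ql qr"
proof -
  have h: "hh ql > 0" "hh qr > 0" using assms by (auto simp: admissible_def)
  have c: "cl ql qr > 0" "cr ql qr > 0" using relaxation_speeds[OF assms] by auto
  have p: "hls ql qr > 0" "hrs ql qr > 0" using star_depths_pos[OF assms] by auto
  show "hh ql * (vel ql - S1 ql qr) = cl ql qr" "hh qr * (S3 ql qr - vel qr) = cr ql qr"
    using h by (simp_all add: Sig1_def Sig3_def)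
  have "us ql qr - S1 ql qr = cl ql qr * (1 / hls ql qr)"
    unfolding star_formulas(5)[OF assms] Sig1_def using c h by (simp add: field_simps)
  then show k1: "hls ql qr * (us ql qr - S1 ql qr) = cl ql qr" using p by simp
  have "S3 ql qr - us ql qr = cr ql qr * (1 / hrs ql qr)"
    unfolding star_formulas(6)[OF assms] Sig3_def using c h by (simp add: field_simps)
  then show k2: "hrs ql qr * (S3 ql qr - us ql qr) = cr ql qr" using p by simp
  show "S1 ql qr < S2 ql qr" using k1 p c unfolding Sig2_def
    by (metis diff_gt_0_iff_gt zero_less_mult_pos)
  show "S2 ql qr < S3 ql qr" using k2 p c unfolding Sig2_def
    by (metis diff_gt_0_iff_gt zero_less_mult_pos)
qed

lemma star_states:
  assumes "admissible ql" "admissible qr"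
  shows "hh (QL ql qr) = hls ql qr" "vel (QL ql qr) = us ql qr"
    "sigxx (QL ql qr) = sigxx ql * (hh ql / hls ql qr)^2"
    "sigzz (QL ql qr) = sigzz ql * (hls ql qr / hh ql)^2"
    "hh (QR ql qr) = hrs ql qr" "vel (QR ql qr) = us ql qr"
    "sigxx (QR ql qr) = sigxx qr * (hh qr / hrs ql qr)^2"
    "sigzz (QR ql qr) = sigzz qr * (hrs ql qr / hh qr)^2"
    "admissible (QL ql qr)" "admissible (QR ql qr)"
proof -
  have p: "hls ql qr > 0" "hrs ql qr > 0" using star_depths_pos[OF assms] by auto
  show h: "hh (QL ql qr) = hls ql qr" "hh (QR ql qr) = hrs ql qr"
    by (simp_all add: qLstar_def qRstar_def Let_def hh_def)
  show "vel (QL ql qr) = us ql qr" "vel (QR ql qr) = us ql qr"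
    "sigxx (QL ql qr) = sigxx ql * (hh ql / hls ql qr)^2"
    "sigzz (QL ql qr) = sigzz ql * (hls ql qr / hh ql)^2"
    "sigxx (QR ql qr) = sigxx qr * (hh qr / hrs ql qr)^2"
    "sigzz (QR ql qr) = sigzz qr * (hrs ql qr / hh qr)^2"
    using p by (simp_all add: qLstar_def qRstar_def Let_def hh_def hu_def hsxx_def hszz_def
        vel_def sigxx_def sigzz_def)
  then show "admissible (QL ql qr)" "admissible (QR ql qr)"
    using assms p h by (simp_all add: admissible_def)
qed

lemma star_states_at_contact:
  assumes "admissible ql" "admissible qr" "vel ql = vel qr" "PP ql = PP qr"
  shows "us ql qr = vel ql" "QL ql qr = ql" "QR ql qr = qr"
proof -
  show us: "us ql qr = vel ql" using star_formulas(1)[OF assms(1,2)] assms(3,4) by simp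
  have "1 / hls ql qr = 1 / hh ql" "1 / hrs ql qr = 1 / hh qr"
    using star_formulas(5,6)[OF assms(1,2)] us assms(3) by simp_all
  then have "hls ql qr = hh ql" "hrs ql qr = hh qr" by simp_all
  then show "QL ql qr = ql" "QR ql qr = qr"
    using star_states[OF assms(1,2)] us assms(3) admissible_conservative[OF assms(1)]
      admissible_conservative[OF assms(2)] admissible_conservative[OF star_states(9)[OF assms(1,2)]]
      admissible_conservative[OF star_states(10)[OF assms(1,2)]]
    by (auto intro!: state_eqI)
qed

lemma s_transported_by_outer_waves:
  assumes "admissible ql" "admissible qr"
  shows "s_xx (QL ql qr) = s_xx ql" "s_xx (QR ql qr) = s_xx qr"
    "s_zz (QL ql qr) = s_zz ql" "s_zz (QR ql qr) = s_zz qr"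
proof -
  note st = star_states[OF assms]
  have p: "hls ql qr > 0" "hrs ql qr > 0" using star_depths_pos[OF assms] by auto
  have h: "hh ql > 0" "hh qr > 0" using assms by (auto simp: admissible_def)
  show "s_xx (QL ql qr) = s_xx ql" "s_xx (QR ql qr) = s_xx qr"
    "s_zz (QL ql qr) = s_zz ql" "s_zz (QR ql qr) = s_zz qr"
    unfolding s_xx_def s_zz_def st using p h by (simp_all add: real_sqrt_mult)
qed

lemma rankine_hugoniot:
  assumes "admissible ql" "admissible qr"
  shows "S1 ql qr * (hh (QL ql qr) - hh ql) = hu (QL ql qr) - hu ql"
    "S2 ql qr * (hh (QR ql qr) - hh (QL ql qr)) = hu (QR ql qr) - hu (QL ql qr)"
    "S3 ql qr * (hh qr - hh (QR ql qr)) = hu qr - hu (QR ql qr)"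
    "S1 ql qr * (hu (QL ql qr) - hu ql)
      = (hu (QL ql qr) * vel (QL ql qr) + pis ql qr) - (hu ql * vel ql + PP ql)"
    "S2 ql qr * (hu (QR ql qr) - hu (QL ql qr))
      = (hu (QR ql qr) * vel (QR ql qr) + pis ql qr) - (hu (QL ql qr) * vel (QL ql qr) + pis ql qr)"
    "S3 ql qr * (hu qr - hu (QR ql qr))
      = (hu qr * vel qr + PP qr) - (hu (QR ql qr) * vel (QR ql qr) + pis ql qr)"
proof -
  note ws = wave_speeds[OF assms] and st = star_states[OF assms]
  note cons = admissible_conservative(1)[OF assms(1)] admissible_conservative(1)[OF assms(2)]
    admissible_conservative(1)[OF st(9)] admissible_conservative(1)[OF st(10)]
  have pis: "pis ql qr - PP ql = - cl ql qr * (us ql qr - vel ql)"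
    "pis ql qr - PP qr = cr ql qr * (us ql qr - vel qr)"
    using star_formulas(3,4)[OF assms] by simp_all
  show "S1 ql qr * (hh (QL ql qr) - hh ql) = hu (QL ql qr) - hu ql"
    using ws(1,2) unfolding cons st by (simp add: algebra_simps)
  show "S3 ql qr * (hh qr - hh (QR ql qr)) = hu qr - hu (QR ql qr)"
    using ws(3,4) unfolding cons st by (simp add: algebra_simps)
  show "S2 ql qr * (hh (QR ql qr) - hh (QL ql qr)) = hu (QR ql qr) - hu (QL ql qr)"
    "S2 ql qr * (hu (QR ql qr) - hu (QL ql qr))
      = (hu (QR ql qr) * vel (QR ql qr) + pis ql qr) - (hu (QL ql qr) * vel (QL ql qr) + pis ql qr)"
    unfolding cons st by (simp_all add: Sig2_def algebra_simps)
  have "S1 ql qr * (hu (QL ql qr) - hu ql)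
      = (hls ql qr * us ql qr * us ql qr - hh ql * vel ql * vel ql)
        - us ql qr * (hls ql qr * (us ql qr - S1 ql qr)) + vel ql * (hh ql * (vel ql - S1 ql qr))"
    unfolding cons st by (simp add: algebra_simps)
  then show "S1 ql qr * (hu (QL ql qr) - hu ql)
      = (hu (QL ql qr) * vel (QL ql qr) + pis ql qr) - (hu ql * vel ql + PP ql)"
    unfolding ws(1,2) unfolding cons st using pis(1) by (simp add: algebra_simps)
  have "S3 ql qr * (hu qr - hu (QR ql qr))
      = vel qr * (hh qr * (S3 ql qr - vel qr)) - us ql qr * (hrs ql qr * (S3 ql qr - us ql qr))
        + (hh qr * vel qr * vel qr - hrs ql qr * us ql qr * us ql qr)"
    unfolding cons st by (simp add: algebra_simps)
  then show "S3 ql qr * (hu qr - hu (QR ql qr))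
      = (hu qr * vel qr + PP qr) - (hu (QR ql qr) * vel (QR ql qr) + pis ql qr)"
    unfolding ws(3,4) unfolding cons st using pis(2) by (simp add: algebra_simps)
qed

definition fluct_minus :: "(state \<Rightarrow> 'a::real_vector) \<Rightarrow> state \<Rightarrow> state \<Rightarrow> 'a" where
  "fluct_minus f ql qr = min 0 (S1 ql qr) *\<^sub>R (f (QL ql qr) - f ql)
     + min 0 (S2 ql qr) *\<^sub>R (f (QR ql qr) - f (QL ql qr)) + min 0 (S3 ql qr) *\<^sub>R (f qr - f (QR ql qr))"

definition fluct_plus :: "(state \<Rightarrow> 'a::real_vector) \<Rightarrow> state \<Rightarrow> state \<Rightarrow> 'a" where
  "fluct_plus f ql qr = max 0 (S1 ql qr) *\<^sub>R (f (QL ql qr) - f ql)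
     + max 0 (S2 ql qr) *\<^sub>R (f (QR ql qr) - f (QL ql qr)) + max 0 (S3 ql qr) *\<^sub>R (f qr - f (QR ql qr))"

lemma fluct_components:
  "fluct_minus (\<lambda>q. q) ql qr
     = (fluct_minus hh ql qr, fluct_minus hu ql qr, fluct_minus hsxx ql qr, fluct_minus hszz ql qr)"
  "fluct_plus (\<lambda>q. q) ql qr
     = (fluct_plus hh ql qr, fluct_plus hu ql qr, fluct_plus hsxx ql qr, fluct_plus hszz ql qr)"
  by (simp_all add: fluct_minus_def fluct_plus_def hh_def hu_def hsxx_def hszz_def prod_eq_iff)

lemma fluct_sum:
  "fluct_minus f ql qr + fluct_plus f ql qr = S1 ql qr *\<^sub>R (f (QL ql qr) - f ql)
     + S2 ql qr *\<^sub>R (f (QR ql qr) - f (QL ql qr)) + S3 ql qr *\<^sub>R (f qr - f (QR ql qr))"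
proof -
  have "min 0 x *\<^sub>R v + max 0 x *\<^sub>R v = x *\<^sub>R v" for x :: real and v :: 'a
    by (simp add: scaleR_add_left[symmetric] min_def max_def)
  then show ?thesis unfolding fluct_minus_def fluct_plus_def by (simp add: algebra_simps)
qed

lemma fluct_at_contact:
  assumes "admissible ql" "admissible qr" "vel ql = vel qr" "PP ql = PP qr"
  shows "fluct_minus f ql qr = min 0 (vel ql) *\<^sub>R (f qr - f ql)"
    "fluct_plus f ql qr = max 0 (vel ql) *\<^sub>R (f qr - f ql)"
  using star_states_at_contact[OF assms]
  by (simp_all add: fluct_minus_def fluct_plus_def Sig2_def)

lemma flux_fluctuation_form:
  assumes "admissible ql" "admissible qr"
  shows "fluxL g eta lam ql qr = phys_flux g eta lam ql + fluct_minus (\<lambda>q. q) ql qr"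
    "fluxR g eta lam ql qr = phys_flux g eta lam qr - fluct_plus (\<lambda>q. q) ql qr"
proof -
  note ws = wave_speeds(5,6)[OF assms] and rh = rankine_hugoniot[OF assms]
  have riem: "riem0 g eta lam ql qr = (if 0 < S1 ql qr then (ql, PP ql)
      else if 0 < S2 ql qr then (QL ql qr, pis ql qr)
      else if 0 < S3 ql qr then (QR ql qr, pis ql qr) else (qr, PP qr))"
    unfolding riem0_def ..
  have fH: "fluxH g eta lam ql qr = (if 0 < S1 ql qr then hu ql else if 0 < S2 ql qr
      then hu (QL ql qr) else if 0 < S3 ql qr then hu (QR ql qr) else hu qr)"
    unfolding fluxH_def riem by simp
  have fHU: "fluxHU g eta lam ql qr = (if 0 < S1 ql qr then hu ql * vel ql + PP ql
      else if 0 < S2 ql qr then hu (QL ql qr) * vel (QL ql qr) + pis ql qr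
      else if 0 < S3 ql qr then hu (QR ql qr) * vel (QR ql qr) + pis ql qr
      else hu qr * vel qr + PP qr)"
    unfolding fluxHU_def riem by simp
  note H = upwind_select_eq[OF ws rh(1-3)] and HU = upwind_select_eq[OF ws rh(4-6)]
  show "fluxL g eta lam ql qr = phys_flux g eta lam ql + fluct_minus (\<lambda>q. q) ql qr"
    unfolding fluxL_def phys_flux_def fluct_components fH fHU H(1) HU(1)
    by (simp add: fluct_minus_def fluxLw_def Let_def algebra_simps)
  show "fluxR g eta lam ql qr = phys_flux g eta lam qr - fluct_plus (\<lambda>q. q) ql qr"
    unfolding fluxR_def phys_flux_def fluct_components fH fHU H(2) HU(2)
    by (simp add: fluct_plus_def fluxRw_def Let_def algebra_simps)
qed

lemma flux_on_diagonal:
  assumes "admissible q"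
  shows "fluxL g eta lam q q = phys_flux g eta lam q" "fluxR g eta lam q q = phys_flux g eta lam q"
  using flux_fluctuation_form[OF assms assms] fluct_at_contact[OF assms assms] by simp_all

lemma pressure_abs_le:
  assumes "admissible q"
  shows "\<bar>PP q\<bar> \<le> hh q * aa q ^ 2"
proof -
  have h: "hh q > 0" "sigxx q > 0" "sigzz q > 0" using assms by (auto simp: admissible_def)
  have K: "eta/(2*lam) > 0" using eta_pos lam_pos by simp
  have "hh q * aa q ^ 2 - PP q = g * hh q ^ 2 / 2 + eta/(2*lam) * hh q * (2 * sigzz q + 2 * sigxx q)"
    "hh q * aa q ^ 2 + PP q = 3 * g * hh q ^ 2 / 2 + eta/(2*lam) * hh q * (4 * sigzz q)"
    unfolding sound_sq(1)[OF assms] pres_def using lam_pos by (simp_all add: field_simps power2_eq_square)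
  moreover have "0 \<le> g * hh q ^ 2 / 2" "0 \<le> eta/(2*lam) * hh q * (2 * sigzz q + 2 * sigxx q)"
    "0 \<le> eta/(2*lam) * hh q * (4 * sigzz q)"
    using g_pos K h by (simp, (intro mult_nonneg_nonneg; simp)+)
  ultimately show ?thesis by (simp add: abs_le_iff)
qed

lemma relaxation_speeds_le:
  assumes "admissible ql" "admissible qr"
  shows "cl ql qr / hh ql \<le> aa ql + 2 * (\<bar>vel ql\<bar> + \<bar>vel qr\<bar>) + 2 * (aa ql + aa qr)"
    "cr ql qr / hh qr \<le> aa qr + 2 * (\<bar>vel ql\<bar> + \<bar>vel qr\<bar>) + 2 * (aa ql + aa qr)"
proof -
  have h: "hh ql > 0" "hh qr > 0" using assms by (auto simp: admissible_def)
  have a: "aa ql > 0" "aa qr > 0" using assms sound_sq(2) by auto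
  define E where "E = hh ql * aa ql + hh qr * aa qr"
  have E: "E > 0" using h a unfolding E_def by (simp add: add_pos_pos)
  have "\<bar>PP qr - PP ql\<bar> \<le> hh ql * aa ql ^ 2 + hh qr * aa qr ^ 2"
    using pressure_abs_le[OF assms(1)] pressure_abs_le[OF assms(2)] by linarith
  also have "\<dots> \<le> (aa ql + aa qr) * E"
    using h a unfolding E_def by (simp add: algebra_simps power2_eq_square)
  finally have p: "max 0 (PP qr - PP ql) / E \<le> aa ql + aa qr"
    "max 0 (PP ql - PP qr) / E \<le> aa ql + aa qr"
    using E a by (simp_all add: pos_divide_le_eq)
  have u: "max 0 (vel ql - vel qr) \<le> \<bar>vel ql\<bar> + \<bar>vel qr\<bar>" by auto
  have "cl ql qr / hh ql = aa ql + 2*(max 0 (vel ql - vel qr) + max 0 (PP qr - PP ql)/E)"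
    using h unfolding cL_def E_def by simp
  with p u show "cl ql qr / hh ql \<le> aa ql + 2 * (\<bar>vel ql\<bar> + \<bar>vel qr\<bar>) + 2 * (aa ql + aa qr)"
    by (smt (verit))
  have "cr ql qr / hh qr = aa qr + 2*(max 0 (vel ql - vel qr) + max 0 (PP ql - PP qr)/E)"
    using h unfolding cR_def E_def by simp
  with p u show "cr ql qr / hh qr \<le> aa qr + 2 * (\<bar>vel ql\<bar> + \<bar>vel qr\<bar>) + 2 * (aa ql + aa qr)"
    by (smt (verit))
qed

theorem wave_speeds_bound:
  assumes "admissible ql" "admissible qr"
  shows "Amax g eta lam ql qr \<le> 3 * (\<bar>vel ql\<bar> + \<bar>vel qr\<bar> + aa ql + aa qr)"
proof -
  note cb = relaxation_speeds_le[OF assms]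
  have h: "hh ql > 0" "hh qr > 0" using assms by (auto simp: admissible_def)
  have a: "aa ql > 0" "aa qr > 0" using assms sound_sq(2) by auto
  have c: "cl ql qr / hh ql > 0" "cr ql qr / hh qr > 0" using relaxation_speeds[OF assms] h by auto
  obtain Z1 where Z1: "Z1 \<ge> 0" "cl ql qr = hh ql * (aa ql + 2*Z1)" "vel ql - us ql qr \<le> Z1"
    using relaxation_speeds(3)[OF assms] by blast
  obtain Z2 where Z2: "Z2 \<ge> 0" "cr ql qr = hh qr * (aa qr + 2*Z2)" "us ql qr - vel qr \<le> Z2"
    using relaxation_speeds(4)[OF assms] by blast
  have "cl ql qr / hh ql = aa ql + 2*Z1" "cr ql qr / hh qr = aa qr + 2*Z2" using Z1(2) Z2(2) h by simp_all
  then have "\<bar>S1 ql qr\<bar> \<le> 3 * (\<bar>vel ql\<bar> + \<bar>vel qr\<bar> + aa ql + aa qr)"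
    "\<bar>S2 ql qr\<bar> \<le> 3 * (\<bar>vel ql\<bar> + \<bar>vel qr\<bar> + aa ql + aa qr)"
    "\<bar>S3 ql qr\<bar> \<le> 3 * (\<bar>vel ql\<bar> + \<bar>vel qr\<bar> + aa ql + aa qr)"
    using cb c a Z1 Z2 unfolding Sig1_def Sig2_def Sig3_def by (simp_all add: abs_le_iff) linarith+
  then show ?thesis unfolding Amax_def by simp
qed

section \<open>The scheme as a convex combination\<close>

text \<open>Under the CFL condition the left half of the fan at the right interface and the right
  half of the fan at the left interface fit into the cell, so the updated average is the
  average over these two half fans: with \<open>t = \<Delta>t/\<Delta>x\<^sub>i\<close>, the weights are the fractions of the
  cell covered by each of their states at the end of the time step.\<close>
definition fan_decomposition :: "real \<Rightarrow> state \<Rightarrow> state \<Rightarrow> state \<Rightarrow> (real \<times> state) list" where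
  "fan_decomposition t qa q0 qb =
    [(1 + t * min 0 (S1 q0 qb) - t * max 0 (S3 qa q0), q0),
     (t * (min 0 (S2 q0 qb) - min 0 (S1 q0 qb)), QL q0 qb),
     (t * (min 0 (S3 q0 qb) - min 0 (S2 q0 qb)), QR q0 qb),
     (t * (- min 0 (S3 q0 qb)), qb),
     (t * max 0 (S1 qa q0), qa),
     (t * (max 0 (S2 qa q0) - max 0 (S1 qa q0)), QL qa q0),
     (t * (max 0 (S3 qa q0) - max 0 (S2 qa q0)), QR qa q0)]"

lemma fan_decomposition_sum:
  "(\<Sum>(w, y)\<leftarrow>fan_decomposition t qa q0 qb. w *\<^sub>R f y)
     = f q0 - t *\<^sub>R (fluct_minus f q0 qb + fluct_plus f qa q0)"
  unfolding fan_decomposition_def fluct_minus_def fluct_plus_def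
  by (simp add: algebra_simps scaleR_diff_right scaleR_add_left)

lemma fan_decomposition_weights: "(\<Sum>(w, y)\<leftarrow>fan_decomposition t qa q0 qb. w) = 1"
  unfolding fan_decomposition_def by (simp add: algebra_simps)

lemma fan_decomposition_states:
  "(w, y) \<in> set (fan_decomposition t qa q0 qb)
     \<Longrightarrow> y \<in> {q0, QL q0 qb, QR q0 qb, qb, qa, QL qa q0, QR qa q0}"
  unfolding fan_decomposition_def by auto

lemma fan_decomposition_convex:
  assumes A: "admissible qa" "admissible q0" "admissible qb"
    and t: "t \<ge> 0" "t * \<bar>S1 q0 qb\<bar> \<le> 1/2" "t * \<bar>S3 qa q0\<bar> \<le> 1/2"
  shows "\<forall>(w, y)\<in>set (fan_decomposition t qa q0 qb). 0 \<le> w \<and> admissible y"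
proof -
  have o: "S1 q0 qb \<le> S2 q0 qb" "S2 q0 qb \<le> S3 q0 qb" "S1 qa q0 \<le> S2 qa q0" "S2 qa q0 \<le> S3 qa q0"
    using wave_speeds(5,6)[OF A(2,3)] wave_speeds(5,6)[OF A(1,2)] by auto
  have "t * (- min 0 (S1 q0 qb)) \<le> t * \<bar>S1 q0 qb\<bar>" "t * max 0 (S3 qa q0) \<le> t * \<bar>S3 qa q0\<bar>"
    using t by (intro mult_left_mono; simp)+
  then have "0 \<le> 1 + t * min 0 (S1 q0 qb) - t * max 0 (S3 qa q0)" using t by linarith
  moreover have "0 \<le> t * (min 0 (S2 q0 qb) - min 0 (S1 q0 qb))"
    "0 \<le> t * (min 0 (S3 q0 qb) - min 0 (S2 q0 qb))" "0 \<le> t * (- min 0 (S3 q0 qb))"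
    "0 \<le> t * max 0 (S1 qa q0)" "0 \<le> t * (max 0 (S2 qa q0) - max 0 (S1 qa q0))"
    "0 \<le> t * (max 0 (S3 qa q0) - max 0 (S2 qa q0))"
    using o by (intro mult_nonneg_nonneg[OF t(1)]; simp add: min_def max_def)+
  moreover have "admissible (QL q0 qb)" "admissible (QR q0 qb)" "admissible (QL qa q0)"
    "admissible (QR qa q0)"
    using star_states(9,10)[OF A(2,3)] star_states(9,10)[OF A(1,2)] by auto
  ultimately show ?thesis using A unfolding fan_decomposition_def
    by (simp only: list.set insert_iff empty_iff ball_simps prod.case)
qed

lemma CFL_local:
  assumes "step_setting g eta lam dx dt q"
  shows "dt / dx i \<ge> 0" "dt / dx i * \<bar>S1 (q i) (q (i + 1))\<bar> \<le> 1/2"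
    "dt / dx i * \<bar>S3 (q (i - 1)) (q i)\<bar> \<le> 1/2"
proof -
  have dx: "dx i > 0" and dt: "dt > 0" using assms unfolding step_setting_def by auto
  have "dt * Amax g eta lam (q i) (q (i + 1)) \<le> min (dx i) (dx (i + 1)) / 2"
    "dt * Amax g eta lam (q (i - 1)) (q (i - 1 + 1)) \<le> min (dx (i - 1)) (dx (i - 1 + 1)) / 2"
    using assms unfolding step_setting_def CFL_def by blast+
  then have "dt * Amax g eta lam (q i) (q (i + 1)) \<le> dx i / 2"
    "dt * Amax g eta lam (q (i - 1)) (q i) \<le> dx i / 2"
    by (simp_all add: min_def split: if_splits)
  moreover have "dt * \<bar>S1 (q i) (q (i + 1))\<bar> \<le> dt * Amax g eta lam (q i) (q (i + 1))"
    "dt * \<bar>S3 (q (i - 1)) (q i)\<bar> \<le> dt * Amax g eta lam (q (i - 1)) (q i)"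
    using dt unfolding Amax_def by (intro mult_left_mono; simp)+
  ultimately have "dt * \<bar>S1 (q i) (q (i + 1))\<bar> \<le> dx i / 2" "dt * \<bar>S3 (q (i - 1)) (q i)\<bar> \<le> dx i / 2"
    by linarith+
  then show "dt / dx i * \<bar>S1 (q i) (q (i + 1))\<bar> \<le> 1/2" "dt / dx i * \<bar>S3 (q (i - 1)) (q i)\<bar> \<le> 1/2"
    using dx by (simp_all add: field_simps)
  show "dt / dx i \<ge> 0" using dx dt by simp
qed

lemma scheme_step_fluctuation_form:
  assumes "step_setting g eta lam dx dt q"
  shows "scheme_step g eta lam dx dt q i
    = q i - (dt / dx i) *\<^sub>R (fluct_minus (\<lambda>q. q) (q i) (q (i + 1)) + fluct_plus (\<lambda>q. q) (q (i - 1)) (q i))"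
proof -
  have A: "admissible (q (i - 1))" "admissible (q i)" "admissible (q (i + 1))"
    using assms unfolding step_setting_def by auto
  show ?thesis
    unfolding scheme_step_def flux_fluctuation_form(1)[OF A(2,3)] flux_fluctuation_form(2)[OF A(1,2)]
    by simp
qed

lemma scheme_step_convex_combination:
  fixes i :: int
  assumes S: "step_setting g eta lam dx dt q"
  defines "xs \<equiv> fan_decomposition (dt / dx i) (q (i - 1)) (q i) (q (i + 1))"
  shows "\<forall>(w, y)\<in>set xs. 0 \<le> w \<and> admissible y" "(\<Sum>(w, y)\<leftarrow>xs. w) = 1"
    "scheme_step g eta lam dx dt q i = (\<Sum>(w, y)\<leftarrow>xs. w *\<^sub>R y)"
proof -
  have "admissible (q (i - 1))" "admissible (q i)" "admissible (q (i + 1))"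
    using S unfolding step_setting_def by auto
  then show "\<forall>(w, y)\<in>set xs. 0 \<le> w \<and> admissible y"
    unfolding xs_def by (rule fan_decomposition_convex[OF _ _ _ CFL_local[OF S]])
  show "(\<Sum>(w, y)\<leftarrow>xs. w) = 1" unfolding xs_def by (rule fan_decomposition_weights)
  show "scheme_step g eta lam dx dt q i = (\<Sum>(w, y)\<leftarrow>xs. w *\<^sub>R y)"
    unfolding xs_def fan_decomposition_sum scheme_step_fluctuation_form[OF S] by simp
qed

lemma scheme_step_admissible:
  assumes S: "step_setting g eta lam dx dt q"
  shows "admissible (scheme_step g eta lam dx dt q i)"
proof -
  note cc = scheme_step_convex_combination[OF S, of i]
  have "0 < f (scheme_step g eta lam dx dt q i)"
    if "linear f" "\<And>y. admissible y \<Longrightarrow> 0 < f y" for f :: "state \<Rightarrow> real"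
    unfolding cc(3) weighted_sum_linear[OF \<open>linear f\<close>] real_scaleR_def
    using cc(1,2) that(2) by (intro weighted_sum_pos) auto
  then show ?thesis using linear_components by (simp add: admissible_iff)
qed

lemma s_xx_le_iff:
  assumes "admissible y" "k > 0"
  shows "s_xx y \<le> k \<longleftrightarrow> 1 / k^2 \<le> hsxx y * hh y"
proof -
  have h: "hh y > 0" and p: "hsxx y * hh y > 0" using assms(1) by (auto simp: admissible_iff)
  have "sqrt (sigxx y) * hh y = sqrt (sigxx y * hh y ^ 2)" using h by (simp add: real_sqrt_mult)
  also have "sigxx y * hh y ^ 2 = hsxx y * hh y" using h by (simp add: sigxx_def power2_eq_square)
  finally have "s_xx y = 1 / sqrt (hsxx y * hh y)" unfolding s_xx_def by simp
  then have "s_xx y \<le> k \<longleftrightarrow> 1 / k \<le> sqrt (hsxx y * hh y)"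
    using p assms(2) by (simp add: field_simps)
  also have "\<dots> \<longleftrightarrow> sqrt ((1/k)^2) \<le> sqrt (hsxx y * hh y)" using assms(2) by simp
  finally show ?thesis unfolding real_sqrt_le_iff by (simp add: power_divide)
qed

lemma s_zz_ge_iff:
  assumes "admissible y" "k > 0"
  shows "k \<le> s_zz y \<longleftrightarrow> k^2 * hh y ^ 3 \<le> hszz y"
proof -
  have h: "hh y > 0" using assms(1) by (simp add: admissible_def)
  have "sqrt (sigzz y) / hh y = sqrt (sigzz y / hh y ^ 2)" using h by (simp add: real_sqrt_divide)
  also have "sigzz y / hh y ^ 2 = hszz y / hh y ^ 3"
    using h by (simp add: sigzz_def power2_eq_square power3_eq_cube)
  moreover have "k = sqrt (k^2)" using assms(2) by simp
  ultimately have "k \<le> s_zz y \<longleftrightarrow> sqrt (k^2) \<le> sqrt (hszz y / hh y ^ 3)"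
    unfolding s_zz_def by metis
  also have "\<dots> \<longleftrightarrow> k^2 \<le> hszz y / hh y ^ 3" by (rule real_sqrt_le_iff)
  also have "\<dots> \<longleftrightarrow> k^2 * hh y ^ 3 \<le> hszz y" using h by (simp add: field_simps)
  finally show ?thesis .
qed

lemma fan_states_inherit:
  assumes S: "step_setting g eta lam dx dt q" and P: "\<And>j. R (q j)"
    and R: "\<And>ql qr. admissible ql \<Longrightarrow> admissible qr \<Longrightarrow> R ql \<Longrightarrow> R qr
      \<Longrightarrow> R (QL ql qr) \<and> R (QR ql qr)"
  shows "\<forall>(w, y)\<in>set (fan_decomposition (dt / dx i) (q (i - 1)) (q i) (q (i + 1))). R y"
proof (clarify)
  fix w y
  assume "(w, y) \<in> set (fan_decomposition (dt / dx i) (q (i - 1)) (q i) (q (i + 1)))"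
  then have y: "y \<in> {q i, QL (q i) (q (i + 1)), QR (q i) (q (i + 1)), q (i + 1),
      q (i - 1), QL (q (i - 1)) (q i), QR (q (i - 1)) (q i)}"
    by (rule fan_decomposition_states)
  have "admissible (q j)" for j using S unfolding step_setting_def by auto
  then have "R (QL (q i) (q (i + 1)))" "R (QR (q i) (q (i + 1)))"
    "R (QL (q (i - 1)) (q i))" "R (QR (q (i - 1)) (q i))"
    using R P by blast+
  then show "R y" using y P by blast
qed

text \<open>Both principles rest on the same mechanism: the bound is an upper or lower bound of
  \<open>h\<sigma>\<^sub>x\<^sub>x\<close> (resp. \<open>h\<sigma>\<^sub>z\<^sub>z\<close>) by a convex function of \<open>h\<close>; it holds at all the states of the
  convex decomposition, since the outer waves transport \<open>s\<close>, and it passes to their average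
  by comparing with the tangent of that convex function at the new depth.\<close>
theorem maximum_principle_s_xx:
  assumes S: "step_setting g eta lam dx dt q" and k: "k > 0" and B: "\<forall>j. s_xx (q j) \<le> k"
  shows "s_xx (scheme_step g eta lam dx dt q i) \<le> k"
proof -
  define xs where "xs = fan_decomposition (dt / dx i) (q (i - 1)) (q i) (q (i + 1))"
  define N where "N = scheme_step g eta lam dx dt q i"
  define H where "H = hh N"
  note cc = scheme_step_convex_combination[OF S, of i, folded xs_def N_def]
  have N: "admissible N" unfolding N_def by (rule scheme_step_admissible[OF S])
  have H: "H > 0" unfolding H_def using N by (simp add: admissible_def)
  have s: "\<forall>(w, y)\<in>set xs. s_xx y \<le> k"
    unfolding xs_def using B by (intro fan_states_inherit[OF S]) (simp_all add: s_transported_by_outer_waves)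
  have tangent: "\<forall>(w, y)\<in>set xs. 0 \<le> w \<and> 2/(k^2*H) + (- 1/(k^2*H^2)) * hh y \<le> hsxx y"
  proof clarify
    fix w y assume "(w, y) \<in> set xs"
    then have y: "admissible y" "s_xx y \<le> k" "0 \<le> w" using cc(1) s by auto
    have hy: "hh y > 0" using y(1) by (simp add: admissible_def)
    have "2/(k^2*H) + (- 1/(k^2*H^2)) * hh y = (2/H - hh y/H^2) / k^2"
      using H k by (simp add: field_simps)
    also have "\<dots> \<le> (1/hh y) / k^2"
      using reciprocal_above_tangent[OF hy H] by (intro divide_right_mono) auto
    also have "\<dots> \<le> hsxx y" using y s_xx_le_iff[OF y(1) k] hy k by (simp add: field_simps)
    finally show "0 \<le> w \<and> 2/(k^2*H) + (- 1/(k^2*H^2)) * hh y \<le> hsxx y" using y by simp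
  qed
  have "linear (\<lambda>y. (- 1/(k^2*H^2)) * hh y)"
    by (rule linearI) (simp_all add: hh_def algebra_simps add_divide_distrib)
  from weighted_sum_above_affine[OF this tangent cc(2)]
  have "2/(k^2*H) + (- 1/(k^2*H^2)) * hh N \<le> hsxx N"
    unfolding cc(3) weighted_sum_linear[OF linear_components(3)] real_scaleR_def .
  then have "1 / k^2 \<le> hsxx N * hh N" using H k unfolding H_def[symmetric]
    by (simp add: field_simps power2_eq_square)
  then show ?thesis unfolding N_def using s_xx_le_iff[OF N[unfolded N_def] k] by simp
qed

theorem minimum_principle_s_zz:
  assumes S: "step_setting g eta lam dx dt q" and k: "k > 0" and B: "\<forall>j. k \<le> s_zz (q j)"
  shows "k \<le> s_zz (scheme_step g eta lam dx dt q i)"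
proof -
  define xs where "xs = fan_decomposition (dt / dx i) (q (i - 1)) (q i) (q (i + 1))"
  define N where "N = scheme_step g eta lam dx dt q i"
  define H where "H = hh N"
  note cc = scheme_step_convex_combination[OF S, of i, folded xs_def N_def]
  have N: "admissible N" unfolding N_def by (rule scheme_step_admissible[OF S])
  have H: "H > 0" unfolding H_def using N by (simp add: admissible_def)
  have s: "\<forall>(w, y)\<in>set xs. k \<le> s_zz y"
    unfolding xs_def using B by (intro fan_states_inherit[OF S]) (simp_all add: s_transported_by_outer_waves)
  have tangent: "\<forall>(w, y)\<in>set xs. 0 \<le> w \<and> - 2*k^2*H^3 + (3*k^2*H^2) * hh y \<le> hszz y"
  proof clarify
    fix w y assume "(w, y) \<in> set xs"
    then have y: "admissible y" "k \<le> s_zz y" "0 \<le> w" using cc(1) s by auto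
    have hy: "hh y > 0" using y(1) by (simp add: admissible_def)
    have "- 2*k^2*H^3 + (3*k^2*H^2) * hh y = k^2 * (3*H^2*hh y - 2*H^3)" by (simp add: algebra_simps)
    also have "\<dots> \<le> k^2 * hh y ^ 3" using cube_above_tangent[OF hy H] by (intro mult_left_mono) auto
    also have "\<dots> \<le> hszz y" using s_zz_ge_iff[OF y(1) k] y(2) by simp
    finally show "0 \<le> w \<and> - 2*k^2*H^3 + (3*k^2*H^2) * hh y \<le> hszz y" using y by simp
  qed
  have "linear (\<lambda>y. (3*k^2*H^2) * hh y)" by (rule linearI) (simp_all add: hh_def algebra_simps)
  from weighted_sum_above_affine[OF this tangent cc(2)]
  have "- 2*k^2*H^3 + (3*k^2*H^2) * hh N \<le> hszz N"
    unfolding cc(3) weighted_sum_linear[OF linear_components(4)] real_scaleR_def .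
  then have "k^2 * hh N ^ 3 \<le> hszz N" unfolding H_def
    by (simp add: power2_eq_square power3_eq_cube algebra_simps)
  then show ?thesis unfolding N_def using s_zz_ge_iff[OF N[unfolded N_def] k] by simp
qed

theorem scheme_step_steady_contact:
  assumes S: "step_setting g eta lam dx dt q" and u: "\<forall>j. vel (q j) = 0"
    and P: "\<forall>j j'. PP (q j) = PP (q j')"
  shows "scheme_step g eta lam dx dt q i = q i"
proof -
  have "admissible (q j)" for j using S unfolding step_setting_def by auto
  then show ?thesis
    unfolding scheme_step_fluctuation_form[OF S] using u P by (simp add: fluct_at_contact)
qed

section \<open>Energy\<close>

definition energy_grad :: "state \<Rightarrow> state" where
  "energy_grad m = (g*hh m - vel m^2/2 - eta/(4*lam)*(ln (sigxx m) + ln (sigzz m)), vel m,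
     eta/(4*lam)*(1 - 1/sigxx m), eta/(4*lam)*(1 - 1/sigzz m))"

lemma energy_above_tangent:
  assumes "admissible y" "admissible m"
  shows "EE m + inner (energy_grad m) (y - m) \<le> EE y"
proof -
  define K where "K = eta/(4*lam)"
  have K: "0 \<le> K" using eta_pos lam_pos unfolding K_def by simp
  have "EE m + inner (energy_grad m) (y - m)
    = hh m * vel m^2/2 + g*hh m^2/2 + K*hh m*(sigxx m + sigzz m - ln (sigxx m * sigzz m) - 2)
    + (g*hh m - vel m^2/2 - K*(ln (sigxx m) + ln (sigzz m)))*(hh y - hh m)
    + vel m*(hh y * vel y - hh m * vel m) + K*(1 - 1/sigxx m)*(hh y * sigxx y - hh m * sigxx m)
    + K*(1 - 1/sigzz m)*(hh y * sigzz y - hh m * sigzz m)"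
    unfolding energy_def energy_grad_def inner_state K_def
    by (simp add: components_diff components_tuple flip: admissible_conservative[OF assms(1)]
        admissible_conservative[OF assms(2)])
  also have "\<dots> \<le> EE y"
    unfolding energy_def K_def[symmetric]
    using assms g_pos K by (intro energy_density_above_tangent) (auto simp: admissible_def)
  finally show ?thesis .
qed

theorem scheme_step_energy_le:
  assumes S: "step_setting g eta lam dx dt q"
  shows "EE (scheme_step g eta lam dx dt q i)
    \<le> EE (q i) - dt / dx i * (fluct_minus EE (q i) (q (i + 1)) + fluct_plus EE (q (i - 1)) (q i))"
proof -
  define xs where "xs = fan_decomposition (dt / dx i) (q (i - 1)) (q i) (q (i + 1))"
  define N where "N = scheme_step g eta lam dx dt q i"
  note cc = scheme_step_convex_combination[OF S, of i, folded xs_def N_def]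
  have N: "admissible N" unfolding N_def by (rule scheme_step_admissible[OF S])
  have "0 \<le> w \<and> (EE N - inner (energy_grad N) N) + inner (energy_grad N) y \<le> EE y"
    if "(w, y) \<in> set xs" for w y
    using bspec[OF cc(1) that] energy_above_tangent[OF _ N, of y] by (simp add: inner_diff_right)
  then have "\<forall>(w, y)\<in>set xs. 0 \<le> w \<and> (EE N - inner (energy_grad N) N) + inner (energy_grad N) y \<le> EE y"
    by fast
  from weighted_sum_above_affine[OF bounded_linear_inner_right[THEN bounded_linear.linear]
      this cc(2)]
  have "EE N \<le> (\<Sum>(w, y)\<leftarrow>xs. w * EE y)" unfolding cc(3)[symmetric] by simp
  also have "\<dots> = EE (q i) - dt / dx i * (fluct_minus EE (q i) (q (i + 1)) + fluct_plus EE (q (i - 1)) (q i))"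
    using fan_decomposition_sum[where f = EE] unfolding xs_def real_scaleR_def .
  finally show ?thesis unfolding N_def .
qed

lemma star_energies:
  assumes "admissible ql" "admissible qr"
  shows "EE (QL ql qr) = hls ql qr * us ql qr^2/2 + g*hls ql qr^2/2 + eta/(4*lam)*hls ql qr
      * (sigxx ql*(hh ql/hls ql qr)^2 + sigzz ql*(hls ql qr/hh ql)^2 - ln (sigxx ql * sigzz ql) - 2)"
    "EE (QR ql qr) = hrs ql qr * (- us ql qr)^2/2 + g*hrs ql qr^2/2 + eta/(4*lam)*hrs ql qr
      * (sigxx qr*(hh qr/hrs ql qr)^2 + sigzz qr*(hrs ql qr/hh qr)^2 - ln (sigxx qr * sigzz qr) - 2)"
proof -
  note st = star_states[OF assms]
  have p: "hls ql qr > 0" "hrs ql qr > 0" using star_depths_pos[OF assms] by auto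
  have h: "hh ql > 0" "hh qr > 0" using assms by (auto simp: admissible_def)
  have m: "sigxx ql*(hh ql/hls ql qr)^2 * (sigzz ql*(hls ql qr/hh ql)^2) = sigxx ql * sigzz ql"
    "sigxx qr*(hh qr/hrs ql qr)^2 * (sigzz qr*(hrs ql qr/hh qr)^2) = sigxx qr * sigzz qr"
    using p h by (simp_all add: field_simps power2_eq_square)
  show "EE (QL ql qr) = hls ql qr * us ql qr^2/2 + g*hls ql qr^2/2 + eta/(4*lam)*hls ql qr
      * (sigxx ql*(hh ql/hls ql qr)^2 + sigzz ql*(hls ql qr/hh ql)^2 - ln (sigxx ql * sigzz ql) - 2)"
    "EE (QR ql qr) = hrs ql qr * (- us ql qr)^2/2 + g*hrs ql qr^2/2 + eta/(4*lam)*hrs ql qr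
      * (sigxx qr*(hh qr/hrs ql qr)^2 + sigzz qr*(hrs ql qr/hh qr)^2 - ln (sigxx qr * sigzz qr) - 2)"
    unfolding energy_def st m by simp_all
qed

lemma subcharacteristic_at_interface:
  assumes A: "admissible ql" "admissible qr"
  defines "K \<equiv> eta/(4*lam)"
  shows "g*(max (hh ql) (hls ql qr))^3 + 6*K * sigzz ql*(max (hh ql) (hls ql qr))^4/hh ql^2
      + 2*K * sigxx ql*hh ql^2 \<le> cl ql qr ^2"
    "g*(max (hh qr) (hrs ql qr))^3 + 6*K * sigzz qr*(max (hh qr) (hrs ql qr))^4/hh qr^2
      + 2*K * sigxx qr*hh qr^2 \<le> cr ql qr ^2"
proof -
  have K: "K > 0" using eta_pos lam_pos unfolding K_def by simp
  have h: "hh ql > 0" "hh qr > 0" "sigxx ql > 0" "sigzz ql > 0" "sigxx qr > 0" "sigzz qr > 0"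
    using A by (auto simp: admissible_def)
  have a: "aa ql > 0" "aa qr > 0"
    "aa ql^2 = g*hh ql + 2*K*(3 * sigzz ql + sigxx ql)" "aa qr^2 = g*hh qr + 2*K*(3 * sigzz qr + sigxx qr)"
    using sound_sq[OF A(1)] sound_sq[OF A(2)] unfolding K_def by simp_all
  have p: "hls ql qr > 0" "hrs ql qr > 0" using star_depths_pos[OF A] by auto
  have c: "cl ql qr > 0" "cr ql qr > 0" using relaxation_speeds[OF A] by auto
  obtain Z1 where Z1: "Z1 \<ge> 0" "cl ql qr = hh ql * (aa ql + 2*Z1)" "(aa ql + Z1) / cl ql qr \<le> 1 / hls ql qr"
    using star_depth_bounds(1)[OF A] by blast
  obtain Z2 where Z2: "Z2 \<ge> 0" "cr ql qr = hh qr * (aa qr + 2*Z2)" "(aa qr + Z2) / cr ql qr \<le> 1 / hrs ql qr"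
    using star_depth_bounds(2)[OF A] by blast
  have "(aa ql + Z1) * hls ql qr \<le> cl ql qr" "(aa qr + Z2) * hrs ql qr \<le> cr ql qr"
    using Z1(3) Z2(3) p c by (simp_all add: field_simps)
  then show "g*(max (hh ql) (hls ql qr))^3 + 6*K * sigzz ql*(max (hh ql) (hls ql qr))^4/hh ql^2
      + 2*K * sigxx ql*hh ql^2 \<le> cl ql qr ^2"
    "g*(max (hh qr) (hrs ql qr))^3 + 6*K * sigzz qr*(max (hh qr) (hrs ql qr))^4/hh qr^2
      + 2*K * sigxx qr*hh qr^2 \<le> cr ql qr ^2"
    using subcharacteristic_condition[OF g_pos K h(1) p(1) a(1) Z1(1) h(3,4) Z1(2) _ a(3)]
      subcharacteristic_condition[OF g_pos K h(2) p(2) a(2) Z2(1) h(5,6) Z2(2) _ a(4)] by auto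
qed

text \<open>The relaxation speed enters only through the subcharacteristic condition; the right
  wave is the mirror image \<open>u \<mapsto> -u\<close> of the left one.\<close>
lemma outer_waves_dissipate_energy:
  assumes A: "admissible ql" "admissible qr"
  shows "(EE (QL ql qr) + pis ql qr) * us ql qr - (EE ql + PP ql) * vel ql
      - S1 ql qr * (EE (QL ql qr) - EE ql) \<le> 0"
    "(EE qr + PP qr) * vel qr - (EE (QR ql qr) + pis ql qr) * us ql qr
      - S3 ql qr * (EE qr - EE (QR ql qr)) \<le> 0"
proof -
  define K where "K = eta/(4*lam)"
  have K: "K > 0" using eta_pos lam_pos unfolding K_def by simp
  have h: "hh ql > 0" "hh qr > 0" "sigxx ql > 0" "sigzz ql > 0" "sigxx qr > 0" "sigzz qr > 0"
    using A by (auto simp: admissible_def)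
  have p: "hls ql qr > 0" "hrs ql qr > 0" using star_depths_pos[OF A] by auto
  have c: "cl ql qr > 0" "cr ql qr > 0" using relaxation_speeds[OF A] by auto
  note ws = wave_speeds[OF A]
  note M = subcharacteristic_at_interface[OF A, folded K_def]
  have P: "PP ql = g*hh ql^2/2 + 2*K*hh ql*(sigzz ql - sigxx ql)"
    "PP qr = g*hh qr^2/2 + 2*K*hh qr*(sigzz qr - sigxx qr)"
    unfolding pres_def K_def by simp_all
  have E: "EE ql = hh ql * vel ql^2/2 + g*hh ql^2/2 + K*hh ql*(sigxx ql + sigzz ql - ln (sigxx ql * sigzz ql) - 2)"
    "EE qr = hh qr * (- vel qr)^2/2 + g*hh qr^2/2 + K*hh qr*(sigxx qr + sigzz qr - ln (sigxx qr * sigzz qr) - 2)"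
    unfolding energy_def K_def by simp_all
  have pl: "pis ql qr = PP ql - cl ql qr * (us ql qr - vel ql)"
    using star_formulas(3)[OF A] .
  have pr: "pis ql qr = PP qr - cr ql qr * (- us ql qr - - vel qr)"
    using star_formulas(4)[OF A] by (simp add: algebra_simps)
  have c1: "cl ql qr = hh ql * (vel ql - S1 ql qr)" "cl ql qr = hls ql qr * (us ql qr - S1 ql qr)"
    and c3: "cr ql qr = hh qr * (- vel qr - - S3 ql qr)" "cr ql qr = hrs ql qr * (- us ql qr - - S3 ql qr)"
    using ws(1-4) by simp_all
  show "(EE (QL ql qr) + pis ql qr) * us ql qr - (EE ql + PP ql) * vel ql
      - S1 ql qr * (EE (QL ql qr) - EE ql) \<le> 0"
    unfolding star_energies(1)[OF A, folded K_def] E(1) pl P(1)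
    by (rule wave_energy_dissipation[OF g_pos K h(1) p(1) c(1) h(3,4) c1 M(1)])
  have "(EE (QR ql qr) + pis ql qr) * (- us ql qr) - (EE qr + PP qr) * (- vel qr)
      - (- S3 ql qr) * (EE (QR ql qr) - EE qr) \<le> 0"
    unfolding star_energies(2)[OF A, folded K_def] E(2) pr P(2)
    by (rule wave_energy_dissipation[OF g_pos K h(2) p(2) c(2) h(5,6) c3 M(2)])
  then show "(EE qr + PP qr) * vel qr - (EE (QR ql qr) + pis ql qr) * us ql qr
      - S3 ql qr * (EE qr - EE (QR ql qr)) \<le> 0"
    by (simp add: algebra_simps)
qed

theorem interface_energy_dissipation:
  assumes A: "admissible ql" "admissible qr"
  shows "energy_flux g eta lam qr - energy_flux g eta lam ql \<le> fluct_minus EE ql qr + fluct_plus EE ql qr"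
proof -
  have "energy_flux g eta lam qr - energy_flux g eta lam ql - (fluct_minus EE ql qr + fluct_plus EE ql qr)
     = ((EE (QL ql qr) + pis ql qr) * us ql qr - (EE ql + PP ql) * vel ql
         - S1 ql qr * (EE (QL ql qr) - EE ql))
     + ((EE qr + PP qr) * vel qr - (EE (QR ql qr) + pis ql qr) * us ql qr
         - S3 ql qr * (EE qr - EE (QR ql qr)))"
    unfolding fluct_sum energy_flux_def Sig2_def by (simp add: algebra_simps)
  then show ?thesis using outer_waves_dissipate_energy[OF A] by linarith
qed

definition numerical_energy_flux :: "state \<Rightarrow> state \<Rightarrow> real" where
  "numerical_energy_flux ql qr = energy_flux g eta lam ql + fluct_minus EE ql qr"

lemma numerical_energy_flux_consistent:
  "admissible q \<Longrightarrow> numerical_energy_flux q q = energy_flux g eta lam q"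
  unfolding numerical_energy_flux_def by (simp add: fluct_at_contact)

theorem discrete_energy_inequality:
  assumes S: "step_setting g eta lam dx dt q"
  shows "EE (scheme_step g eta lam dx dt q i) - EE (q i)
    + dt / dx i * (numerical_energy_flux (q i) (q (i + 1)) - numerical_energy_flux (q (i - 1)) (q i))
    \<le> 0"
proof -
  have "admissible (q (i - 1))" "admissible (q i)" using S unfolding step_setting_def by auto
  then have "dt / dx i * (energy_flux g eta lam (q i) - energy_flux g eta lam (q (i - 1))
      - (fluct_minus EE (q (i - 1)) (q i) + fluct_plus EE (q (i - 1)) (q i))) \<le> 0"
    by (intro mult_nonneg_nonpos[OF CFL_local(1)[OF S]]) (simp add: interface_energy_dissipation)
  then show ?thesis using scheme_step_energy_le[OF S, of i]
    unfolding numerical_energy_flux_def by (simp add: algebra_simps)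
qed

section \<open>Continuity of the solver, sharpness and consistency\<close>

lemma isCont_pres [continuous_intros]:
  "isCont f x \<Longrightarrow> hh (f x) \<noteq> 0 \<Longrightarrow> isCont (\<lambda>p. PP (f p)) x"
  unfolding pres_def by (intro continuous_intros) auto

lemma isCont_sound [continuous_intros]:
  "isCont f x \<Longrightarrow> hh (f x) \<noteq> 0 \<Longrightarrow> isCont (\<lambda>p. aa (f p)) x"
  unfolding sound_def dPdh_def by (intro continuous_intros) auto

context
  fixes f f' :: "'a::t2_space \<Rightarrow> state" and x :: 'a
  assumes cont: "isCont f x" "isCont f' x" and adm: "admissible (f x)" "admissible (f' x)"
begin

private lemma pos_at_point: "hh (f x) > 0" "hh (f' x) > 0" "cl (f x) (f' x) > 0" "cr (f x) (f' x) > 0"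
  "cl (f x) (f' x) + cr (f x) (f' x) > 0"
  "hh (f x) * aa (f x) + hh (f' x) * aa (f' x) > 0"
  using adm relaxation_speeds[OF adm] sound_sq(2)[OF adm(1)] sound_sq(2)[OF adm(2)]
  by (auto simp: admissible_def add_pos_pos)

lemma isCont_cL [continuous_intros]: "isCont (\<lambda>p. cl (f p) (f' p)) x"
  unfolding cL_def using cont pos_at_point by (intro continuous_intros; force)

lemma isCont_cR [continuous_intros]: "isCont (\<lambda>p. cr (f p) (f' p)) x"
  unfolding cR_def using cont pos_at_point by (intro continuous_intros; force)

lemma isCont_ustar [continuous_intros]: "isCont (\<lambda>p. us (f p) (f' p)) x"
  unfolding ustar_def Let_def using cont pos_at_point
  by (intro continuous_intros) auto

private lemma star_depths_at_point: "hls (f x) (f' x) \<noteq> 0" "hrs (f x) (f' x) \<noteq> 0"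
  using star_depths_pos[OF adm] by auto

lemma isCont_hLstar [continuous_intros]: "isCont (\<lambda>p. hls (f p) (f' p)) x"
  unfolding hLstar_def Let_def using cont pos_at_point star_depths_at_point(1)
  by (intro continuous_intros) (auto simp: hLstar_def)

lemma isCont_hRstar [continuous_intros]: "isCont (\<lambda>p. hrs (f p) (f' p)) x"
  unfolding hRstar_def Let_def using cont pos_at_point star_depths_at_point(2)
  by (intro continuous_intros) (auto simp: hRstar_def)

lemma isCont_Sig1 [continuous_intros]: "isCont (\<lambda>p. S1 (f p) (f' p)) x"
  unfolding Sig1_def using cont pos_at_point by (intro continuous_intros; force)

lemma isCont_Sig2 [continuous_intros]: "isCont (\<lambda>p. S2 (f p) (f' p)) x"
  unfolding Sig2_def by (rule isCont_ustar)

lemma isCont_Sig3 [continuous_intros]: "isCont (\<lambda>p. S3 (f p) (f' p)) x"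
  unfolding Sig3_def using cont pos_at_point by (intro continuous_intros; force)

end

lemma solver_on_diagonal:
  assumes "admissible q"
  shows "cl q q = hh q * aa q" "cr q q = hh q * aa q" "us q q = vel q"
    "hls q q = hh q" "hrs q q = hh q"
    "S1 q q = vel q - aa q" "S2 q q = vel q" "S3 q q = vel q + aa q"
proof -
  have h: "hh q > 0" "aa q > 0" using assms sound_sq(2) by (auto simp: admissible_def)
  show c: "cl q q = hh q * aa q" "cr q q = hh q * aa q" unfolding cL_def cR_def by simp_all
  show u: "us q q = vel q" unfolding ustar_def Let_def c using h by (simp add: field_simps)
  show "hls q q = hh q" "hrs q q = hh q" unfolding hLstar_def hRstar_def Let_def c by simp_all
  show "S1 q q = vel q - aa q" "S2 q q = vel q" "S3 q q = vel q + aa q"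
    unfolding Sig1_def Sig2_def Sig3_def c u using h by simp_all
qed

theorem sharp_numerical_viscosity:
  assumes "admissible q"
  shows "((\<lambda>(ql, qr). S1 ql qr) \<longlongrightarrow> vel q - aa q) (at (q, q))"
    "((\<lambda>(ql, qr). S2 ql qr) \<longlongrightarrow> vel q) (at (q, q))"
    "((\<lambda>(ql, qr). S3 ql qr) \<longlongrightarrow> vel q + aa q) (at (q, q))"
proof -
  have "isCont (\<lambda>p. S1 (fst p) (snd p)) (q, q)" "isCont (\<lambda>p. S2 (fst p) (snd p)) (q, q)"
    "isCont (\<lambda>p. S3 (fst p) (snd p)) (q, q)"
    using assms by (auto intro!: continuous_intros)
  then show "((\<lambda>(ql, qr). S1 ql qr) \<longlongrightarrow> vel q - aa q) (at (q, q))"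
    "((\<lambda>(ql, qr). S2 ql qr) \<longlongrightarrow> vel q) (at (q, q))"
    "((\<lambda>(ql, qr). S3 ql qr) \<longlongrightarrow> vel q + aa q) (at (q, q))"
    unfolding isCont_def case_prod_beta' using solver_on_diagonal[OF assms] by simp_all
qed

lemma nonconservative_flux_jump_waves:
  assumes "admissible ql" "admissible qr" "w = hsxx \<or> w = hszz"
  shows "w (fluxR g eta lam ql qr - fluxL g eta lam ql qr) = (w qr * vel qr - w ql * vel ql)
      - (S1 ql qr * (w (QL ql qr) - w ql) + us ql qr * (w (QR ql qr) - w (QL ql qr))
         + S3 ql qr * (w qr - w (QR ql qr)))"
proof -
  have "fluxR g eta lam ql qr - fluxL g eta lam ql qr = phys_flux g eta lam qr - phys_flux g eta lam ql
      - (S1 ql qr *\<^sub>R (QL ql qr - ql) + S2 ql qr *\<^sub>R (QR ql qr - QL ql qr) + S3 ql qr *\<^sub>R (qr - QR ql qr))"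
    unfolding flux_fluctuation_form[OF assms(1,2)] fluct_sum[of "\<lambda>q. q", symmetric]
    by (simp add: algebra_simps)
  then show ?thesis using assms(3) unfolding phys_flux_def Sig2_def by (auto simp: hsxx_def hszz_def)
qed

lemma depth_ratio_jumps:
  assumes "admissible ql" "admissible qr"
  shows "cl ql qr * (hh ql / hls ql qr - 1) = hh ql * (us ql qr - vel ql)"
    "cr ql qr * (hh qr / hrs ql qr - 1) = hh qr * (vel qr - us ql qr)"
  using star_formulas(5,6)[OF assms] relaxation_speeds(1,2)[OF assms] assms
  by (simp_all add: admissible_def field_simps)

lemma nonconservative_flux_jumps:
  assumes A: "admissible ql" "admissible qr"
  defines "rl \<equiv> hh ql / hls ql qr" and "rr \<equiv> hh qr / hrs ql qr"
  shows "hsxx (fluxR g eta lam ql qr - fluxL g eta lam ql qr)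
      = hsxx ql * (1 + rl) * (us ql qr - vel ql) + hsxx qr * (1 + rr) * (vel qr - us ql qr)"
    "hszz (fluxR g eta lam ql qr - fluxL g eta lam ql qr)
      = - hszz ql * (1 + rl) / rl^2 * (us ql qr - vel ql) - hszz qr * (1 + rr) / rr^2 * (vel qr - us ql qr)"
proof -
  note st = star_states[OF A] and ws = wave_speeds[OF A]
  note cons = admissible_conservative(2,3)[OF A(1)] admissible_conservative(2,3)[OF A(2)]
    admissible_conservative(2,3)[OF st(9)] admissible_conservative(2,3)[OF st(10)]
  note jw = nonconservative_flux_jump_waves[OF A, of hsxx, simplified]
    nonconservative_flux_jump_waves[OF A, of hszz, simplified]
  note r = depth_ratio_jumps[OF A, folded rl_def rr_def]
  have h: "hh ql > 0" "hh qr > 0" using A by (auto simp: admissible_def)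
  have p: "hls ql qr > 0" "hrs ql qr > 0" using star_depths_pos[OF A] by auto
  have "hsxx (fluxR g eta lam ql qr - fluxL g eta lam ql qr)
      = cl ql qr * (sigxx ql * rl^2 - sigxx ql) + cr ql qr * (sigxx qr * rr^2 - sigxx qr)"
    unfolding jw cons st fan_jump_identity[OF ws(1-4)] rl_def rr_def ..
  also have "\<dots> = sigxx ql * (1 + rl) * (cl ql qr * (rl - 1)) + sigxx qr * (1 + rr) * (cr ql qr * (rr - 1))"
    by (simp add: algebra_simps power2_eq_square)
  finally show "hsxx (fluxR g eta lam ql qr - fluxL g eta lam ql qr)
      = hsxx ql * (1 + rl) * (us ql qr - vel ql) + hsxx qr * (1 + rr) * (vel qr - us ql qr)"
    unfolding r cons by (simp add: algebra_simps)
  have pos: "rl > 0" "rr > 0" unfolding rl_def rr_def using h p by auto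
  have "hszz (fluxR g eta lam ql qr - fluxL g eta lam ql qr)
      = cl ql qr * (sigzz ql / rl^2 - sigzz ql) + cr ql qr * (sigzz qr / rr^2 - sigzz qr)"
    unfolding jw cons st fan_jump_identity[OF ws(1-4)] rl_def rr_def using h p
    by (simp add: field_simps)
  also have "\<dots> = - sigzz ql * (1 + rl) / rl^2 * (cl ql qr * (rl - 1))
      - sigzz qr * (1 + rr) / rr^2 * (cr ql qr * (rr - 1))"
    using pos by (simp add: field_simps power2_eq_square)
  finally show "hszz (fluxR g eta lam ql qr - fluxL g eta lam ql qr)
      = - hszz ql * (1 + rl) / rl^2 * (us ql qr - vel ql) - hszz qr * (1 + rr) / rr^2 * (vel qr - us ql qr)"
    unfolding r cons using pos by (simp add: field_simps)
qed

definition pres_jump_coeff :: "state \<Rightarrow> state \<Rightarrow> state" where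
  "pres_jump_coeff ql qr = (- g/2 * (hh ql + hh qr), 0, eta/(2*lam), - eta/(2*lam))"

lemma pres_conservative:
  "admissible q \<Longrightarrow> PP q = g * hh q^2/2 + eta/(2*lam) * (hszz q - hsxx q)"
  unfolding pres_def using admissible_conservative[of q] lam_pos by (simp add: field_simps)

lemma pres_jump_linear:
  assumes "admissible ql" "admissible qr"
  shows "PP ql - PP qr = inner (pres_jump_coeff ql qr) (qr - ql)"
  unfolding pres_jump_coeff_def inner_state pres_conservative[OF assms(1)] pres_conservative[OF assms(2)]
  using lam_pos by (simp add: components_tuple components_diff field_simps power2_eq_square)

definition ustar_jump_coeff :: "state \<Rightarrow> state \<Rightarrow> state" where
  "ustar_jump_coeff ql qr = (cr ql qr / (cl ql qr + cr ql qr)) *\<^sub>R vel_jump_coeff ql qr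
    + (1 / (cl ql qr + cr ql qr)) *\<^sub>R pres_jump_coeff ql qr"

lemma ustar_jump_linear:
  assumes "admissible ql" "admissible qr"
  shows "us ql qr - vel ql = inner (ustar_jump_coeff ql qr) (qr - ql)"
  unfolding ustar_jump_coeff_def inner_add_left inner_scaleR_left
    vel_jump_linear[OF assms, symmetric] pres_jump_linear[OF assms, symmetric] star_formulas(1)[OF assms]
  by (simp add: add_divide_distrib diff_divide_distrib)

text \<open>The coefficients of \<open>\<F>\<^sub>r - \<F>\<^sub>l + B(q) (q\<^sub>r - q\<^sub>l)\<close> as a linear form in \<open>q\<^sub>r - q\<^sub>l\<close>
  (its first two components vanish); \<open>vel_jump_coeff q q\<close> linearizes the velocity jump in
  the nonconservative product.\<close>
definition xx_jump_coeff :: "state \<Rightarrow> state \<Rightarrow> state \<Rightarrow> state" where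
  "xx_jump_coeff q ql qr = (hsxx ql * (1 + hh ql / hls ql qr)) *\<^sub>R ustar_jump_coeff ql qr
    + (hsxx qr * (1 + hh qr / hrs ql qr)) *\<^sub>R (vel_jump_coeff ql qr - ustar_jump_coeff ql qr)
    - (2 * hsxx q) *\<^sub>R vel_jump_coeff q q"

definition zz_jump_coeff :: "state \<Rightarrow> state \<Rightarrow> state \<Rightarrow> state" where
  "zz_jump_coeff q ql qr = (- hszz ql * (1 + hh ql / hls ql qr) / (hh ql / hls ql qr)^2) *\<^sub>R ustar_jump_coeff ql qr
    + (- hszz qr * (1 + hh qr / hrs ql qr) / (hh qr / hrs ql qr)^2) *\<^sub>R (vel_jump_coeff ql qr - ustar_jump_coeff ql qr)
    - (- 2 * hszz q) *\<^sub>R vel_jump_coeff q q"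

lemma flux_jump_linear_form:
  assumes A: "admissible q" and AA: "admissible ql" "admissible qr"
  shows "fluxR g eta lam ql qr - fluxL g eta lam ql qr + ncB q (qr - ql)
    = (0, 0, inner (xx_jump_coeff q ql qr) (qr - ql), inner (zz_jump_coeff q ql qr) (qr - ql))"
proof -
  have du: "(hu (qr - ql) - vel q * hh (qr - ql)) / hh q = inner (vel_jump_coeff q q) (qr - ql)"
    using A unfolding vel_jump_coeff_def inner_state
    by (simp add: components_tuple admissible_def field_simps)
  have u: "us ql qr - vel ql = inner (ustar_jump_coeff ql qr) (qr - ql)"
    "vel qr - us ql qr = inner (vel_jump_coeff ql qr - ustar_jump_coeff ql qr) (qr - ql)"
    using ustar_jump_linear[OF AA] vel_jump_linear[OF AA] by (simp_all add: inner_diff_left)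
  note fj = nonconservative_flux_jumps[OF AA, unfolded u]
  have "hsxx (fluxR g eta lam ql qr - fluxL g eta lam ql qr + ncB q (qr - ql))
      = inner (xx_jump_coeff q ql qr) (qr - ql)"
    unfolding components_add fj ncB_def Let_def components_tuple du xx_jump_coeff_def
    by (simp add: inner_add_left inner_diff_left)
  moreover have "hszz (fluxR g eta lam ql qr - fluxL g eta lam ql qr + ncB q (qr - ql))
      = inner (zz_jump_coeff q ql qr) (qr - ql)"
    unfolding components_add fj ncB_def Let_def components_tuple du zz_jump_coeff_def
    by (simp add: inner_add_left inner_diff_left)
  ultimately show ?thesis
    by (intro state_eqI) (simp_all add: components_add components_diff components_tuple
        fluxL_def fluxR_def ncB_def Let_def)
qed

lemma jump_coeffs_vanish_on_diagonal:
  assumes A: "admissible q"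
  shows "((\<lambda>p. xx_jump_coeff q (fst p) (snd p)) \<longlongrightarrow> 0) (at (q, q))"
    "((\<lambda>p. zz_jump_coeff q (fst p) (snd p)) \<longlongrightarrow> 0) (at (q, q))"
proof -
  have "isCont (\<lambda>p. vel_jump_coeff (fst p) (snd p)) (q, q)"
    "isCont (\<lambda>p. ustar_jump_coeff (fst p) (snd p)) (q, q)"
    using A lam_pos relaxation_speeds[OF A A]
    unfolding ustar_jump_coeff_def vel_jump_coeff_def pres_jump_coeff_def
    by (auto intro!: continuous_intros simp: admissible_def add_pos_pos)
  then have lim: "((\<lambda>p. vel_jump_coeff (fst p) (snd p)) \<longlongrightarrow> vel_jump_coeff q q) (at (q, q))"
    "((\<lambda>p. ustar_jump_coeff (fst p) (snd p)) \<longlongrightarrow> ustar_jump_coeff q q) (at (q, q))"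
    by (simp_all add: isCont_def)
  have "isCont (\<lambda>p. hsxx (fst p) * (1 + hh (fst p) / hls (fst p) (snd p))) (q, q)"
    "isCont (\<lambda>p. hsxx (snd p) * (1 + hh (snd p) / hrs (fst p) (snd p))) (q, q)"
    "isCont (\<lambda>p. - hszz (fst p) * (1 + hh (fst p) / hls (fst p) (snd p))
      / (hh (fst p) / hls (fst p) (snd p))^2) (q, q)"
    "isCont (\<lambda>p. - hszz (snd p) * (1 + hh (snd p) / hrs (fst p) (snd p))
      / (hh (snd p) / hrs (fst p) (snd p))^2) (q, q)"
    using A solver_on_diagonal[OF A] by (auto intro!: continuous_intros simp: admissible_def)
  then have k: "((\<lambda>p. hsxx (fst p) * (1 + hh (fst p) / hls (fst p) (snd p))) \<longlongrightarrow> 2 * hsxx q) (at (q, q))"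
    "((\<lambda>p. hsxx (snd p) * (1 + hh (snd p) / hrs (fst p) (snd p))) \<longlongrightarrow> 2 * hsxx q) (at (q, q))"
    "((\<lambda>p. - hszz (fst p) * (1 + hh (fst p) / hls (fst p) (snd p))
      / (hh (fst p) / hls (fst p) (snd p))^2) \<longlongrightarrow> - 2 * hszz q) (at (q, q))"
    "((\<lambda>p. - hszz (snd p) * (1 + hh (snd p) / hrs (fst p) (snd p))
      / (hh (snd p) / hrs (fst p) (snd p))^2) \<longlongrightarrow> - 2 * hszz q) (at (q, q))"
    using A solver_on_diagonal[OF A] by (simp_all add: isCont_def admissible_def mult.commute)
  show "((\<lambda>p. xx_jump_coeff q (fst p) (snd p)) \<longlongrightarrow> 0) (at (q, q))"
    unfolding xx_jump_coeff_def by (rule tendsto_wave_coefficient[OF k(1,2) lim(2,1)])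
  show "((\<lambda>p. zz_jump_coeff q (fst p) (snd p)) \<longlongrightarrow> 0) (at (q, q))"
    unfolding zz_jump_coeff_def by (rule tendsto_wave_coefficient[OF k(3,4) lim(2,1)])
qed

theorem flux_consistency:
  assumes A: "admissible q"
  shows "((\<lambda>(ql, qr). (1 / norm (qr - ql)) *\<^sub>R
      (fluxR g eta lam ql qr - fluxL g eta lam ql qr + ncB q (qr - ql))) \<longlongrightarrow> 0) (at (q, q))"
proof -
  note C = jump_coeffs_vanish_on_diagonal[OF A]
  have "((\<lambda>p. (0::real, 0::real,
      inner (xx_jump_coeff q (fst p) (snd p)) (snd p - fst p) / norm (snd p - fst p),
      inner (zz_jump_coeff q (fst p) (snd p)) (snd p - fst p) / norm (snd p - fst p)))
      \<longlongrightarrow> (0, 0, 0, 0)) (at (q, q))"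
    by (intro tendsto_intros tendsto_inner_div_norm C)
  moreover have "\<forall>\<^sub>F p in at (q, q). (0, 0,
      inner (xx_jump_coeff q (fst p) (snd p)) (snd p - fst p) / norm (snd p - fst p),
      inner (zz_jump_coeff q (fst p) (snd p)) (snd p - fst p) / norm (snd p - fst p))
      = (case p of (ql, qr) \<Rightarrow>
        (1 / norm (qr - ql)) *\<^sub>R (fluxR g eta lam ql qr - fluxL g eta lam ql qr + ncB q (qr - ql)))"
    using eventually_admissible_near[OF A] by (rule eventually_mono)
      (simp add: case_prod_beta flux_jump_linear_form[OF A])
  ultimately show ?thesis by (simp add: tendsto_cong zero_prod_def)
qed

end

theorem theorem1:
  fixes g eta lam :: real
  assumes "g > 0" and "eta > 0" and "lam > 0"
  shows
    \<comment> \<open>(i) consistency\<close>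
    "(\<forall>q. admissible q \<longrightarrow>
        fluxL g eta lam q q = phys_flux g eta lam q \<and>
        fluxR g eta lam q q = phys_flux g eta lam q \<and>
        ((\<lambda>(ql, qr). (1 / norm (qr - ql)) *\<^sub>R
            (fluxR g eta lam ql qr - fluxL g eta lam ql qr + ncB q (qr - ql)))
          \<longlongrightarrow> 0) (at (q, q)))
   \<and> \<comment> \<open>(ii) positivity\<close>
    (\<forall>dx dt qn. step_setting g eta lam dx dt qn \<longrightarrow>
        (\<forall>i. admissible (scheme_step g eta lam dx dt qn i)))
   \<and> \<comment> \<open>(iii) conservativity in h and hu\<close>
    (\<forall>ql qr. admissible ql \<longrightarrow> admissible qr \<longrightarrow>
        hh (fluxL g eta lam ql qr) = hh (fluxR g eta lam ql qr) \<and>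
        hu (fluxL g eta lam ql qr) = hu (fluxR g eta lam ql qr))
   \<and> \<comment> \<open>(iv) discrete energy inequality\<close>
    (\<exists>G :: state \<Rightarrow> state \<Rightarrow> real.
        (\<forall>q. admissible q \<longrightarrow> G q q = energy_flux g eta lam q) \<and>
        (\<forall>dx dt qn. step_setting g eta lam dx dt qn \<longrightarrow>
           (\<forall>i. energy g eta lam (scheme_step g eta lam dx dt qn i) - energy g eta lam (qn i)
                + dt / dx i * (G (qn i) (qn (i + 1)) - G (qn (i - 1)) (qn i)) \<le> 0)))
   \<and> \<comment> \<open>(v) maximum principle on s_xx, minimum principle on s_zz\<close>
    (\<forall>dx dt qn k. step_setting g eta lam dx dt qn \<longrightarrow> k > 0 \<longrightarrow>
        ((\<forall>i. s_xx (qn i) \<le> k) \<longrightarrow> (\<forall>i. s_xx (scheme_step g eta lam dx dt qn i) \<le> k)) \<and>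
        ((\<forall>i. s_zz (qn i) \<ge> k) \<longrightarrow> (\<forall>i. s_zz (scheme_step g eta lam dx dt qn i) \<ge> k)))
   \<and> \<comment> \<open>(vi) steady contact discontinuities are exactly resolved\<close>
    (\<forall>dx dt qn. step_setting g eta lam dx dt qn \<longrightarrow>
        (\<forall>i. vel (qn i) = 0) \<longrightarrow> (\<forall>i j. pres g eta lam (qn i) = pres g eta lam (qn j)) \<longrightarrow>
        (\<forall>i. scheme_step g eta lam dx dt qn i = qn i))
   \<and> \<comment> \<open>(vii) finite propagation speed, with an absolute constant C\<close>
    (\<exists>C :: real. \<forall>g' eta' lam'. g' > 0 \<longrightarrow> eta' > 0 \<longrightarrow> lam' > 0 \<longrightarrow>
        (\<forall>ql qr. admissible ql \<longrightarrow> admissible qr \<longrightarrow>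
           Amax g' eta' lam' ql qr \<le> C * (\<bar>vel ql\<bar> + \<bar>vel qr\<bar>
              + sound g' eta' lam' ql + sound g' eta' lam' qr)))
   \<and> \<comment> \<open>(viii) sharp numerical viscosity\<close>
    (\<forall>q. admissible q \<longrightarrow>
        ((\<lambda>(ql, qr). Sig1 g eta lam ql qr) \<longlongrightarrow> vel q - sound g eta lam q) (at (q, q)) \<and>
        ((\<lambda>(ql, qr). Sig2 g eta lam ql qr) \<longlongrightarrow> vel q) (at (q, q)) \<and>
        ((\<lambda>(ql, qr). Sig3 g eta lam ql qr) \<longlongrightarrow> vel q + sound g eta lam q) (at (q, q)))"
proof -
  interpret relaxation_solver g eta lam using assms by unfold_locales
  have speed_bound: "\<exists>C :: real. \<forall>g' eta' lam'. g' > 0 \<longrightarrow> eta' > 0 \<longrightarrow> lam' > 0 \<longrightarrow>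
      (\<forall>ql qr. admissible ql \<longrightarrow> admissible qr \<longrightarrow>
         Amax g' eta' lam' ql qr \<le> C * (\<bar>vel ql\<bar> + \<bar>vel qr\<bar>
            + sound g' eta' lam' ql + sound g' eta' lam' qr))"
    by (intro exI[of _ 3] allI impI relaxation_solver.wave_speeds_bound)
      (simp_all add: relaxation_solver_def)
  have energy: "\<exists>G :: state \<Rightarrow> state \<Rightarrow> real.
      (\<forall>q. admissible q \<longrightarrow> G q q = energy_flux g eta lam q) \<and>
      (\<forall>dx dt qn. step_setting g eta lam dx dt qn \<longrightarrow>
         (\<forall>i. energy g eta lam (scheme_step g eta lam dx dt qn i) - energy g eta lam (qn i)
              + dt / dx i * (G (qn i) (qn (i + 1)) - G (qn (i - 1)) (qn i)) \<le> 0))"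
    using numerical_energy_flux_consistent discrete_energy_inequality by blast
  show ?thesis
    using flux_on_diagonal flux_consistency scheme_step_admissible energy maximum_principle_s_xx
      minimum_principle_s_zz scheme_step_steady_contact speed_bound sharp_numerical_viscosity
    by (simp add: fluxL_def fluxR_def hh_def hu_def)
qed

end
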